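(* The functor $\alpha\colon\mathrm{EMD}\to\mathrm{Ab}$, $(A,B,\phi,\psi)\mapsto A$, is full and essentially surjective, and reflects isomorphisms. For any $M,M'\in\mathrm{EMD}$ there is a natural short exact sequence \[ 0\to\mathrm{Hom}(\alpha(M)[2],\alpha(M')/2)\to\mathrm{EMD}(M,M')\xrightarrow{\alpha}\mathrm{Hom}(\alpha(M),\alpha(M'))\to0. \]
   Context: For an abelian group $U$, $U[2]=\{u:2u=0\}$ and $U/2=U/2U$. A Moore diagram is $(A,B,\phi,\psi)$ with abelian groups $A,B$, $\phi\colon A\to B$, $\psi\colon B\to A$, $\psi\phi=0$, $\phi\psi=2\cdot1_B$; morphisms are pairs $(f\colon A\to A',g\colon B\to B')$ with $g\phi=\phi'f$, $f\psi=\psi'g$. It is exact if the induced sequence $A/2\xrightarrow{\phi}B\xrightarrow{\psi}A[2]$ is short exact; $\mathrm{EMD}$ is the category of exact Moore diagrams, and $\alpha$ sends $(f,g)$ to $f$. *)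

theory Defs
  imports "HOL-Algebra.Algebra"
begin

(* Abelian groups are HOL-Algebra groups G :: 'a monoid with comm_group G,
   written multiplicatively: "2u" is u \<otimes> u, "0" is \<one>.
   Homomorphisms are taken extensional (undefined off the carrier), so that
   equality of homomorphisms is equality on the carrier. *)

definition hom_ext :: "'a monoid \<Rightarrow> 'b monoid \<Rightarrow> ('a \<Rightarrow> 'b) set" where
  "hom_ext G H = hom G H \<inter> extensional (carrier G)"

definition hom_group :: "'a monoid \<Rightarrow> 'b monoid \<Rightarrow> ('a \<Rightarrow> 'b) monoid" where
  "hom_group G H = \<lparr>carrier = hom_ext G H,
     monoid.mult = (\<lambda>f g. \<lambda>x\<in>carrier G. f x \<otimes>\<^bsub>H\<^esub> g x),
     monoid.one = (\<lambda>x\<in>carrier G. \<one>\<^bsub>H\<^esub>)\<rparr>"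

definition tors2 :: "'a monoid \<Rightarrow> 'a set" where
  "tors2 G = {x \<in> carrier G. x \<otimes>\<^bsub>G\<^esub> x = \<one>\<^bsub>G\<^esub>}"

definition twoG :: "'a monoid \<Rightarrow> 'a set" where
  "twoG G = {x \<otimes>\<^bsub>G\<^esub> x | x. x \<in> carrier G}"

definition tors2_grp :: "'a monoid \<Rightarrow> 'a monoid" where
  "tors2_grp G = subgroup_generated G (tors2 G)"

definition mod2 :: "'a monoid \<Rightarrow> 'a set monoid" where
  "mod2 G = G Mod (twoG G)"

definition mod2_map :: "'a monoid \<Rightarrow> 'b monoid \<Rightarrow> ('a \<Rightarrow> 'b) \<Rightarrow> 'a set \<Rightarrow> 'b set" where
  "mod2_map G H f = (\<lambda>C\<in>carrier (mod2 G). twoG H #>\<^bsub>H\<^esub> f (SOME a. a \<in> C))"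

type_synonym ('a, 'b) md = "'a monoid \<times> 'b monoid \<times> ('a \<Rightarrow> 'b) \<times> ('b \<Rightarrow> 'a)"

definition md_A :: "('a, 'b) md \<Rightarrow> 'a monoid" where "md_A M = fst M"
definition md_B :: "('a, 'b) md \<Rightarrow> 'b monoid" where "md_B M = fst (snd M)"
definition md_phi :: "('a, 'b) md \<Rightarrow> 'a \<Rightarrow> 'b" where "md_phi M = fst (snd (snd M))"
definition md_psi :: "('a, 'b) md \<Rightarrow> 'b \<Rightarrow> 'a" where "md_psi M = snd (snd (snd M))"

definition moore_diagram :: "('a, 'b) md \<Rightarrow> bool" where
  "moore_diagram M \<longleftrightarrow>
     comm_group (md_A M) \<and> comm_group (md_B M) \<and>
     md_phi M \<in> hom (md_A M) (md_B M) \<and> md_psi M \<in> hom (md_B M) (md_A M) \<and>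
     (\<forall>a\<in>carrier (md_A M). md_psi M (md_phi M a) = \<one>\<^bsub>md_A M\<^esub>) \<and>
     (\<forall>b\<in>carrier (md_B M). md_phi M (md_psi M b) = b \<otimes>\<^bsub>md_B M\<^esub> b)"

definition md_phibar :: "('a, 'b) md \<Rightarrow> 'a set \<Rightarrow> 'b" where
  "md_phibar M = (\<lambda>C\<in>carrier (mod2 (md_A M)). md_phi M (SOME a. a \<in> C))"

definition exact_md :: "('a, 'b) md \<Rightarrow> bool" where
  "exact_md M \<longleftrightarrow> moore_diagram M \<and>
     inj_on (md_phibar M) (carrier (mod2 (md_A M))) \<and>
     md_phibar M ` carrier (mod2 (md_A M)) = kernel (md_B M) (md_A M) (md_psi M) \<and>
     md_psi M ` carrier (md_B M) = tors2 (md_A M)"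

definition emd_hom :: "('a, 'b) md \<Rightarrow> ('c, 'd) md \<Rightarrow> (('a \<Rightarrow> 'c) \<times> ('b \<Rightarrow> 'd)) set" where
  "emd_hom M M' = {(f, g). f \<in> hom_ext (md_A M) (md_A M') \<and> g \<in> hom_ext (md_B M) (md_B M') \<and>
      (\<forall>a\<in>carrier (md_A M). g (md_phi M a) = md_phi M' (f a)) \<and>
      (\<forall>b\<in>carrier (md_B M). f (md_psi M b) = md_psi M' (g b))}"

definition emd_group :: "('a, 'b) md \<Rightarrow> ('c, 'd) md \<Rightarrow> (('a \<Rightarrow> 'c) \<times> ('b \<Rightarrow> 'd)) monoid" where
  "emd_group M M' = \<lparr>carrier = emd_hom M M',
     monoid.mult = (\<lambda>p q. (\<lambda>x\<in>carrier (md_A M). fst p x \<otimes>\<^bsub>md_A M'\<^esub> fst q x,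
                    \<lambda>y\<in>carrier (md_B M). snd p y \<otimes>\<^bsub>md_B M'\<^esub> snd q y)),
     monoid.one = (\<lambda>x\<in>carrier (md_A M). \<one>\<^bsub>md_A M'\<^esub>, \<lambda>y\<in>carrier (md_B M). \<one>\<^bsub>md_B M'\<^esub>)\<rparr>"

definition emd_comp :: "('a, 'b) md \<Rightarrow> ('c \<Rightarrow> 'e) \<times> ('d \<Rightarrow> 'f) \<Rightarrow> ('a \<Rightarrow> 'c) \<times> ('b \<Rightarrow> 'd)
    \<Rightarrow> ('a \<Rightarrow> 'e) \<times> ('b \<Rightarrow> 'f)" where
  "emd_comp M q p = (compose (carrier (md_A M)) (fst q) (fst p), compose (carrier (md_B M)) (snd q) (snd p))"

definition emd_id :: "('a, 'b) md \<Rightarrow> ('a \<Rightarrow> 'a) \<times> ('b \<Rightarrow> 'b)" where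
  "emd_id M = (\<lambda>x\<in>carrier (md_A M). x, \<lambda>y\<in>carrier (md_B M). y)"

definition md_alpha :: "('a \<Rightarrow> 'c) \<times> ('b \<Rightarrow> 'd) \<Rightarrow> 'a \<Rightarrow> 'c" where
  "md_alpha p = fst p"

definition emd_iota :: "('a, 'b) md \<Rightarrow> ('c, 'd) md \<Rightarrow> ('a \<Rightarrow> 'c set) \<Rightarrow> ('a \<Rightarrow> 'c) \<times> ('b \<Rightarrow> 'd)" where
  "emd_iota M M' h = (\<lambda>x\<in>carrier (md_A M). \<one>\<^bsub>md_A M'\<^esub>,
                      \<lambda>y\<in>carrier (md_B M). md_phibar M' (h (md_psi M y)))"

(* functoriality of Hom(alpha(-)[2], alpha(-)/2): for u : A_N \<rightarrow> A_M and u' : A_M' \<rightarrow> A_N',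
   h \<mapsto> (u'/2) \<circ> h \<circ> u|_{A_N[2]} *)
definition hom2_map :: "'e monoid \<Rightarrow> ('e \<Rightarrow> 'a) \<Rightarrow> 'c monoid \<Rightarrow> 'g monoid \<Rightarrow> ('c \<Rightarrow> 'g)
    \<Rightarrow> ('a \<Rightarrow> 'c set) \<Rightarrow> 'e \<Rightarrow> 'g set" where
  "hom2_map AN u AM' AN' u' h = (\<lambda>x\<in>carrier (tors2_grp AN). mod2_map AM' AN' u' (h (u x)))"

end

theory Submission
  imports Defs
begin

text \<open>
  In an exact Moore diagram \<open>B\<close> is an extension of \<open>A[2]\<close> by \<open>A/2\<close> in which \<open>2b = phi (psi b)\<close>.

  A homomorphism \<open>f : A \<rightarrow> A'\<close> lifts to \<open>B \<rightarrow> B'\<close> by Zorn's lemma on partial lifts: a lift defined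
  on a subgroup containing \<open>phi ` A\<close> extends to \<open>b\<close>, because \<open>2b = phi (psi b)\<close> is already in
  its domain and any \<open>b'\<close> with \<open>psi' b' = f (psi b)\<close> satisfies \<open>2b' = phi' (f (psi b))\<close>.
  A morphism \<open>(0, g)\<close> kills \<open>phi ` A = ker psi\<close> and lands in \<open>ker psi' = phibar' ` (A'/2)\<close>,
  hence is \<open>phibar' \<circ> h \<circ> psi\<close> for a unique \<open>h : A[2] \<rightarrow> A'/2\<close>; this identifies the kernel of
  \<open>alpha\<close>, and a diagram chase shows that \<open>g\<close> is bijective when \<open>f\<close> is.

  For essential surjectivity, Zorn's lemma gives a symmetric bilinear form \<open>m\<close> on \<open>A[2]\<close> with
  \<open>m x x = x\<close> (an \<open>\<bbbF>\<^sub>2\<close>-vector space has a basis), and \<open>A/2 \<times> A[2]\<close> with the product twisted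
  by \<open>m\<close> is an exact Moore diagram over \<open>A\<close>.
\<close>

section \<open>Abelian groups\<close>

lemma (in comm_group) hom_restrict_mult:
  assumes "monoid K" "f \<in> hom K G" "g \<in> hom K G"
  shows "(\<lambda>x\<in>carrier K. f x \<otimes> g x) \<in> hom K G"
  using assms by (auto simp: hom_def Pi_def monoid.m_closed m_ac)

lemma (in comm_group) hom_restrict_inv:
  assumes "monoid K" "f \<in> hom K G"
  shows "(\<lambda>x\<in>carrier K. inv (f x)) \<in> hom K G"
  using assms by (auto simp: hom_def Pi_def monoid.m_closed inv_mult_group m_comm)

locale abelian = comm_group G for G :: "'a monoid" (structure)

lemma (in abelian) comm_group_hom_group:
  fixes K :: "'k monoid"
  assumes K: "monoid K"
  shows "comm_group (hom_group K G)"
proof -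
  have carrier: "carrier (hom_group K G) = hom K G \<inter> extensional (carrier K)"
    by (simp add: hom_group_def hom_ext_def)
  have mult: "f \<otimes>\<^bsub>hom_group K G\<^esub> g = (\<lambda>x\<in>carrier K. f x \<otimes> g x)" for f g
    by (simp add: hom_group_def)
  have one: "\<one>\<^bsub>hom_group K G\<^esub> = (\<lambda>x\<in>carrier K. \<one>)"
    by (simp add: hom_group_def)
  show ?thesis
  proof (rule comm_groupI, unfold carrier mult one)
    fix f assume f: "f \<in> hom K G \<inter> extensional (carrier K)"
    then have "(\<lambda>x\<in>carrier K. inv (f x)) \<in> hom K G \<inter> extensional (carrier K)"
      using hom_restrict_inv[OF K] by simp
    moreover have "(\<lambda>x\<in>carrier K. restrict (\<lambda>x. inv (f x)) (carrier K) x \<otimes> f x) = (\<lambda>x\<in>carrier K. \<one>)"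
      using f by (auto simp: hom_def Pi_def intro!: restrict_ext)
    ultimately show "\<exists>g\<in>hom K G \<inter> extensional (carrier K). (\<lambda>x\<in>carrier K. g x \<otimes> f x) = (\<lambda>x\<in>carrier K. \<one>)"
      by blast
  qed (auto simp: hom_restrict_mult[OF K] hom_def Pi_def m_ac extensional_def monoid.m_closed[OF K]
            intro!: restrict_ext ext)
qed

lemma (in abelian) subgroup_twoG: "subgroup (twoG G) G"
proof (rule subgroupI)
  show "twoG G \<subseteq> carrier G" "twoG G \<noteq> {}"
    using one_closed by (force simp: twoG_def)+
next
  fix x assume "x \<in> twoG G"
  then obtain y where "y \<in> carrier G" "x = y \<otimes> y" by (auto simp: twoG_def)
  then show "inv x \<in> twoG G"
    by (auto simp: twoG_def inv_mult_group intro!: exI[of _ "inv y"])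
next
  fix x y assume "x \<in> twoG G" "y \<in> twoG G"
  then obtain u v where "u \<in> carrier G" "v \<in> carrier G" "x = u \<otimes> u" "y = v \<otimes> v"
    by (auto simp: twoG_def)
  then show "x \<otimes> y \<in> twoG G"
    by (auto simp: twoG_def m_ac intro!: exI[of _ "u \<otimes> v"])
qed

lemma (in abelian) subgroup_tors2: "subgroup (tors2 G) G"
  by (rule subgroupI) (auto simp: tors2_def m_ac simp flip: inv_mult_group)

lemma (in abelian) comm_group_mod2: "comm_group (mod2 G)"
  unfolding mod2_def by (rule abelian_FactGroup[OF subgroup_twoG])

lemma (in abelian) rcos_twoG_hom: "(#>) (twoG G) \<in> hom G (mod2 G)"
  unfolding mod2_def
  by (rule normal.r_coset_hom_Mod) (simp add: normal_iff_subgroup subgroup_twoG)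

lemma (in abelian) carrier_mod2: "carrier (mod2 G) = (#>) (twoG G) ` carrier G"
  by (simp add: mod2_def carrier_FactGroup)

lemma (in abelian) mod2_cases:
  assumes "C \<in> carrier (mod2 G)"
  obtains a where "a \<in> carrier G" "C = twoG G #> a"
  using assms carrier_mod2 by auto

lemma (in abelian) rcos_twoG_eq_one_iff:
  assumes "a \<in> carrier G"
  shows "twoG G #> a = \<one>\<^bsub>mod2 G\<^esub> \<longleftrightarrow> a \<in> twoG G"
  using assms subgroup_twoG
  by (metis coset_join1 coset_join2 is_group mod2_def one_FactGroup)

lemma (in abelian) mod2_sq:
  assumes "C \<in> carrier (mod2 G)"
  shows "C \<otimes>\<^bsub>mod2 G\<^esub> C = \<one>\<^bsub>mod2 G\<^esub>"
proof -
  obtain a where a: "a \<in> carrier G" "C = twoG G #> a" using assms by (rule mod2_cases)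
  have "C \<otimes>\<^bsub>mod2 G\<^esub> C = twoG G #> (a \<otimes> a)"
    using a by (simp add: hom_mult[OF rcos_twoG_hom])
  also have "\<dots> = \<one>\<^bsub>mod2 G\<^esub>"
    using a by (subst rcos_twoG_eq_one_iff) (auto simp: twoG_def)
  finally show ?thesis .
qed

lemma (in abelian) some_in_mod2:
  assumes "C \<in> carrier (mod2 G)"
  shows "(SOME a. a \<in> C) \<in> carrier G" and "twoG G #> (SOME a. a \<in> C) = C"
proof -
  obtain a where a: "a \<in> carrier G" "C = twoG G #> a" using assms by (rule mod2_cases)
  have "a \<in> C" using a subgroup_twoG by (simp add: rcos_self)
  then have s: "(SOME a. a \<in> C) \<in> C" by (rule someI)
  moreover have "C \<subseteq> carrier G"
    using a subgroup_twoG by (simp add: r_coset_subset_G subgroup.subset)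
  ultimately show "(SOME a. a \<in> C) \<in> carrier G" by blast
  show "twoG G #> (SOME a. a \<in> C) = C"
    using repr_independence[of _ "twoG G" a] s a subgroup_twoG by simp
qed

lemma hom_twoG: "f \<in> hom G H \<Longrightarrow> x \<in> twoG G \<Longrightarrow> f x \<in> twoG H"
  by (auto simp: twoG_def hom_def Pi_def)

lemma hom_tors2: "f \<in> hom G H \<Longrightarrow> group G \<Longrightarrow> group H \<Longrightarrow> x \<in> tors2 G \<Longrightarrow> f x \<in> tors2 H"
  by (auto simp: tors2_def hom_in_carrier hom_one simp flip: hom_mult)

lemma (in abelian) carrier_tors2_grp: "carrier (tors2_grp G) = tors2 G"
  unfolding tors2_grp_def by (rule subgroup.carrier_subgroup_generated_subgroup[OF subgroup_tors2])

lemma mult_tors2_grp: "monoid.mult (tors2_grp G) = monoid.mult G"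
  and one_tors2_grp: "\<one>\<^bsub>tors2_grp G\<^esub> = \<one>\<^bsub>G\<^esub>"
  by (simp_all add: tors2_grp_def subgroup_generated_def)

lemma (in comm_group) subgroup_Un_rcos:
  assumes H: "subgroup H G" and x: "x \<in> carrier G" "x \<otimes> x \<in> H"
  shows "subgroup (H \<union> (H #> x)) G"
proof -
  interpret H: subgroup H G by (rule H)
  have xh: "y \<in> H #> x \<longleftrightarrow> (\<exists>h\<in>H. y = h \<otimes> x)" for y by (auto simp: r_coset_def)
  show ?thesis
  proof (rule subgroupI)
    show "H \<union> (H #> x) \<subseteq> carrier G" "H \<union> (H #> x) \<noteq> {}"
      using x by (auto simp: xh)
  next
    fix y assume "y \<in> H \<union> (H #> x)"
    then consider "y \<in> H" | h where "h \<in> H" "y = h \<otimes> x" by (auto simp: xh)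
    then show "inv y \<in> H \<union> (H #> x)"
    proof cases
      case (2 h)
      have "inv y = (inv h \<otimes> inv (x \<otimes> x)) \<otimes> x"
        using 2 x H.subset by (simp add: inv_mult_group m_assoc m_comm[of "inv x" "inv h"] subsetD)
      then show ?thesis using 2 x by (auto simp: xh)
    qed simp
  next
    fix y z assume "y \<in> H \<union> (H #> x)" "z \<in> H \<union> (H #> x)"
    then consider "y \<in> H" "z \<in> H"
      | h where "h \<in> H" "y = h \<otimes> x" "z \<in> H" | h where "y \<in> H" "h \<in> H" "z = h \<otimes> x"
      | h k where "h \<in> H" "k \<in> H" "y = h \<otimes> x" "z = k \<otimes> x"
      by (auto simp: xh)
    then show "y \<otimes> z \<in> H \<union> (H #> x)"
    proof cases
      case 1
      then show ?thesis by simp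
    next
      case (2 h)
      then have "y \<otimes> z = (h \<otimes> z) \<otimes> x" using x by (simp add: m_ac)
      then show ?thesis using 2 by (auto simp: xh)
    next
      case (3 h)
      then have "y \<otimes> z = (y \<otimes> h) \<otimes> x" using x by (simp add: m_ac)
      then show ?thesis using 3 by (auto simp: xh)
    next
      case (4 h k)
      then have "y \<otimes> z = (x \<otimes> x) \<otimes> (h \<otimes> k)" using x by (simp add: m_ac)
      then show ?thesis using 4 x by simp
    qed
  qed
qed

lemma (in comm_group) Un_rcos_decompose:
  assumes U: "subgroup U G" and t: "t \<in> carrier G" "t \<otimes> t = \<one>" "t \<notin> U"
  defines "lo \<equiv> \<lambda>x. if x \<in> U then x else x \<otimes> t" and "tp \<equiv> \<lambda>b. if b then t else \<one>"
  shows "x \<in> U \<union> (U #> t) \<Longrightarrow> lo x \<in> U \<and> x = lo x \<otimes> tp (x \<notin> U)"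
    and "x \<in> U \<union> (U #> t) \<Longrightarrow> y \<in> U \<union> (U #> t) \<Longrightarrow>
      (x \<otimes> y \<notin> U) = ((x \<notin> U) \<noteq> (y \<notin> U)) \<and> lo (x \<otimes> y) = lo x \<otimes> lo y"
proof -
  interpret U: subgroup U G by (rule U)
  have coset: "x \<in> U #> t \<longleftrightarrow> (\<exists>u\<in>U. x = u \<otimes> t)" for x by (auto simp: r_coset_def)
  have tp_c: "tp b \<in> carrier G" for b using t by (simp add: tp_def)
  have not_U: "u \<otimes> t \<notin> U" if "u \<in> U" for u
  proof
    assume "u \<otimes> t \<in> U"
    then have "inv u \<otimes> (u \<otimes> t) \<in> U" using that by simp
    then show False using that t by (simp add: m_assoc[symmetric])
  qed
  show split: "lo x \<in> U \<and> x = lo x \<otimes> tp (x \<notin> U)" if "x \<in> U \<union> (U #> t)" for x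
    using that t not_U by (auto simp: coset lo_def tp_def m_assoc)
  have parts: "(u \<otimes> tp b \<notin> U) = b \<and> lo (u \<otimes> tp b) = u" if "u \<in> U" for u b
    using that t not_U by (auto simp: lo_def tp_def m_assoc)
  fix y assume xy: "x \<in> U \<union> (U #> t)" "y \<in> U \<union> (U #> t)"
  have "tp ((x \<notin> U) \<noteq> (y \<notin> U)) = tp (x \<notin> U) \<otimes> tp (y \<notin> U)"
    using t by (auto simp: tp_def)
  then have "x \<otimes> y = (lo x \<otimes> lo y) \<otimes> tp ((x \<notin> U) \<noteq> (y \<notin> U))"
    using split[OF xy(1)] split[OF xy(2)] tp_c by (metis U.mem_carrier m_lcomm m_assoc m_closed)
  then show "(x \<otimes> y \<notin> U) = ((x \<notin> U) \<noteq> (y \<notin> U)) \<and> lo (x \<otimes> y) = lo x \<otimes> lo y"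
    using parts split xy by simp
qed

lemma (in group) subgroup_Union_chain:
  assumes chain: "subset.chain {H. subgroup H G} \<C>" and ne: "\<C> \<noteq> {}"
  shows "subgroup (\<Union>\<C>) G"
proof -
  have sub: "subgroup H G" if "H \<in> \<C>" for H
    using chain that by (auto simp: subset_chain_def)
  show ?thesis
  proof (rule subgroupI)
    show "\<Union>\<C> \<subseteq> carrier G"
      using sub subgroup.subset by (metis Union_least)
    show "\<Union>\<C> \<noteq> {}"
      using ne sub subgroup.one_closed by (metis Union_empty_conv empty_iff ex_in_conv)
    show "inv x \<in> \<Union>\<C>" if "x \<in> \<Union>\<C>" for x
      using that sub subgroup.m_inv_closed by (metis UnionE UnionI)
  next
    fix x y assume "x \<in> \<Union>\<C>" "y \<in> \<Union>\<C>"
    then obtain H where "H \<in> \<C>" "{x, y} \<subseteq> H"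
      using finite_subset_Union_chain[of "{x, y}" \<C>] chain ne by (metis empty_subsetI finite.emptyI finite_insert insert_subset)
    then show "x \<otimes> y \<in> \<Union>\<C>" using sub subgroup.m_closed by (metis UnionI insert_subset)
  qed
qed

lemma DirProd_comm_group:
  assumes "comm_group G" "comm_group H"
  shows "comm_group (G \<times>\<times> H)"
proof -
  interpret G: comm_group G by fact
  interpret H: comm_group H by fact
  show ?thesis
    by (rule group.group_comm_groupI[OF DirProd_group[OF G.is_group H.is_group]])
       (auto simp: G.m_comm H.m_comm)
qed

lemma iso_twoG_iff:
  assumes h: "h \<in> iso G H" and G: "monoid G" and a: "a \<in> carrier G"
  shows "h a \<in> twoG H \<longleftrightarrow> a \<in> twoG G"
proof
  assume "h a \<in> twoG H"
  then obtain y where y: "y \<in> carrier H" "h a = y \<otimes>\<^bsub>H\<^esub> y" by (auto simp: twoG_def)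
  then obtain x where x: "x \<in> carrier G" "y = h x"
    using h by (auto simp: iso_def bij_betw_def)
  moreover have "h \<in> hom G H" using h by (simp add: iso_def)
  ultimately have "h a = h (x \<otimes>\<^bsub>G\<^esub> x)" using y by (simp add: hom_mult)
  then have "a = x \<otimes>\<^bsub>G\<^esub> x"
    using h a x G by (auto simp: iso_def bij_betw_def monoid.m_closed dest: inj_onD)
  then show "a \<in> twoG G" using x by (auto simp: twoG_def)
qed (use h in \<open>auto simp: iso_def intro: hom_twoG\<close>)

lemma iso_tors2_iff:
  assumes h: "h \<in> iso G H" and G: "group G" and H: "group H" and a: "a \<in> carrier G"
  shows "h a \<in> tors2 H \<longleftrightarrow> a \<in> tors2 G"
proof
  assume "h a \<in> tors2 H"
  moreover have hh: "h \<in> hom G H" using h by (simp add: iso_def)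
  ultimately have "h (a \<otimes>\<^bsub>G\<^esub> a) = h \<one>\<^bsub>G\<^esub>"
    using G H a by (simp add: tors2_def hom_mult hom_one group.is_monoid)
  then have "a \<otimes>\<^bsub>G\<^esub> a = \<one>\<^bsub>G\<^esub>"
    using h a G by (auto simp: iso_def bij_betw_def group.is_monoid monoid.m_closed dest: inj_onD)
  then show "a \<in> tors2 G" using a by (simp add: tors2_def)
qed (use assms in \<open>auto simp: iso_def intro: hom_tors2\<close>)

lemma (in group_hom) factor_through_surj:
  assumes onto: "h ` carrier G = carrier H" and g: "g \<in> hom G K" and K: "group K"
    and vanish: "\<And>x. x \<in> carrier G \<Longrightarrow> h x = \<one>\<^bsub>H\<^esub> \<Longrightarrow> g x = \<one>\<^bsub>K\<^esub>"
  obtains k where "k \<in> hom H K" "k \<in> extensional (carrier H)" "\<And>x. x \<in> carrier G \<Longrightarrow> g x = k (h x)"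
proof
  interpret g: group_hom G K g by (simp add: group_hom_def group_hom_axioms_def g K is_group)
  have g_eq: "g x = g y" if xy: "x \<in> carrier G" "y \<in> carrier G" "h x = h y" for x y
  proof -
    have "g (x \<otimes> inv y) = \<one>\<^bsub>K\<^esub>" using xy by (intro vanish) simp_all
    then show ?thesis using xy by (simp add: g.H.inv_solve_right')
  qed
  define k where "k = (\<lambda>t\<in>carrier H. g (SOME x. x \<in> carrier G \<and> h x = t))"
  show k_h: "g x = k (h x)" if "x \<in> carrier G" for x
  proof -
    have "\<exists>y. y \<in> carrier G \<and> h y = h x" using that by blast
    then have "(SOME y. y \<in> carrier G \<and> h y = h x) \<in> carrier G \<and> h (SOME y. y \<in> carrier G \<and> h y = h x) = h x"
      by (rule someI_ex)
    then show ?thesis using that g_eq[of x "SOME y. y \<in> carrier G \<and> h y = h x"] by (simp add: k_def)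
  qed
  show "k \<in> hom H K"
  proof (rule homI)
    fix t assume "t \<in> carrier H"
    then obtain x where x: "x \<in> carrier G" "t = h x" using onto by blast
    then show "k t \<in> carrier K" using k_h[OF x(1)] g.hom_closed[OF x(1)] by simp
  next
    fix s t assume "s \<in> carrier H" "t \<in> carrier H"
    then obtain x y where xy: "x \<in> carrier G" "y \<in> carrier G" "s = h x" "t = h y"
      using onto by blast
    have "k (s \<otimes>\<^bsub>H\<^esub> t) = g (x \<otimes> y)" using xy k_h[of "x \<otimes> y"] by simp
    also have "\<dots> = k s \<otimes>\<^bsub>K\<^esub> k t" using xy k_h[symmetric] by simp
    finally show "k (s \<otimes>\<^bsub>H\<^esub> t) = k s \<otimes>\<^bsub>K\<^esub> k t" .
  qed
  show "k \<in> extensional (carrier H)" by (simp add: k_def)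
qed

lemma (in group_hom) factor_through_inj:
  assumes inj: "inj_on h (carrier G)" and K: "monoid K" and g: "g \<in> hom K H"
    and into: "g ` carrier K \<subseteq> h ` carrier G"
  obtains k where "k \<in> hom K G" "\<And>x. x \<in> carrier K \<Longrightarrow> g x = h (k x)"
proof
  define k where "k = (\<lambda>x. inv_into (carrier G) h (g x))"
  have g_in: "g x \<in> h ` carrier G" if "x \<in> carrier K" for x
    using that into by blast
  show k_h: "g x = h (k x)" if "x \<in> carrier K" for x
    using g_in[OF that] by (simp add: k_def f_inv_into_f)
  have k_in: "k x \<in> carrier G" if "x \<in> carrier K" for x
    using g_in[OF that] by (simp add: k_def inv_into_into)
  show "k \<in> hom K G"
  proof (rule homI)
    fix x y assume xy: "x \<in> carrier K" "y \<in> carrier K"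
    then have xyK: "x \<otimes>\<^bsub>K\<^esub> y \<in> carrier K" using K by (simp add: monoid.m_closed)
    have "h (k (x \<otimes>\<^bsub>K\<^esub> y)) = g x \<otimes>\<^bsub>H\<^esub> g y"
      using k_h[OF xyK] Group.hom_mult[OF g xy] by simp
    also have "\<dots> = h (k x \<otimes> k y)" using xy k_h k_in by simp
    finally have "h (k (x \<otimes>\<^bsub>K\<^esub> y)) = h (k x \<otimes> k y)" .
    then show "k (x \<otimes>\<^bsub>K\<^esub> y) = k x \<otimes> k y"
      using inj_onD[OF inj] k_in xy xyK by simp
  qed (rule k_in)
qed

section \<open>Exact Moore diagrams and their morphisms\<close>

locale exact_moore =
  fixes M :: "('a, 'b) md"
  assumes exact: "exact_md M"
begin

abbreviation "A \<equiv> md_A M"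
abbreviation "B \<equiv> md_B M"
abbreviation "phi \<equiv> md_phi M"
abbreviation "psi \<equiv> md_psi M"
abbreviation "phibar \<equiv> md_phibar M"

lemma moore_diagram: "moore_diagram M"
  using exact by (simp add: exact_md_def)

lemma psi_phi: "a \<in> carrier A \<Longrightarrow> psi (phi a) = \<one>\<^bsub>A\<^esub>"
  and phi_psi: "b \<in> carrier B \<Longrightarrow> phi (psi b) = b \<otimes>\<^bsub>B\<^esub> b"
  using moore_diagram by (auto simp: moore_diagram_def)

sublocale A: abelian A
  using moore_diagram by (simp add: moore_diagram_def abelian_def)

sublocale B: abelian B
  using moore_diagram by (simp add: moore_diagram_def abelian_def)

sublocale phi: group_hom A B phi
  using moore_diagram by (simp add: moore_diagram_def group_hom_def group_hom_axioms_def)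

sublocale psi: group_hom B A psi
  using moore_diagram by (simp add: moore_diagram_def group_hom_def group_hom_axioms_def)

lemma phibar_inj: "inj_on phibar (carrier (mod2 A))"
  and phibar_image: "phibar ` carrier (mod2 A) = kernel B A psi"
  and psi_image: "psi ` carrier B = tors2 A"
  using exact by (auto simp: exact_md_def)

lemma phi_twoG:
  assumes "x \<in> twoG A"
  shows "phi x = \<one>\<^bsub>B\<^esub>"
proof -
  obtain a where a: "a \<in> carrier A" "x = a \<otimes>\<^bsub>A\<^esub> a" using assms by (auto simp: twoG_def)
  then have "phi x = phi (psi (phi a))" by (simp add: phi_psi)
  then show ?thesis using a by (simp add: psi_phi)
qed

lemma phibar_rcos:
  assumes a: "a \<in> carrier A"
  shows "phibar (twoG A #>\<^bsub>A\<^esub> a) = phi a"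
proof -
  define C where "C = twoG A #>\<^bsub>A\<^esub> a"
  define s where "s = (SOME x. x \<in> C)"
  have C: "C \<in> carrier (mod2 A)" using a A.carrier_mod2 by (simp add: C_def)
  have "s \<in> twoG A #>\<^bsub>A\<^esub> s"
    unfolding s_def using A.some_in_mod2(1)[OF C] A.subgroup_twoG by (rule A.rcos_self)
  then have "s \<in> C" unfolding s_def by (simp only: A.some_in_mod2(2)[OF C])
  then obtain h where h: "h \<in> twoG A" "s = h \<otimes>\<^bsub>A\<^esub> a"
    unfolding C_def r_coset_def by blast
  have "h \<in> carrier A" using subgroup.mem_carrier[OF A.subgroup_twoG h(1)] .
  then have "phi s = phi a" using h a by (simp add: phi_twoG)
  moreover have "phibar C = phi s" using C unfolding md_phibar_def s_def by simp
  ultimately show ?thesis by (simp add: C_def)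
qed

lemma phibar_hom: "phibar \<in> hom (mod2 A) B"
proof (rule homI)
  fix C assume "C \<in> carrier (mod2 A)"
  then obtain a where "a \<in> carrier A" "C = twoG A #>\<^bsub>A\<^esub> a" by (rule A.mod2_cases)
  then show "phibar C \<in> carrier B" by (simp add: phibar_rcos)
next
  fix C D assume "C \<in> carrier (mod2 A)" "D \<in> carrier (mod2 A)"
  then obtain a b where ab: "a \<in> carrier A" "b \<in> carrier A"
    and CD: "C = twoG A #>\<^bsub>A\<^esub> a" "D = twoG A #>\<^bsub>A\<^esub> b"
    by (metis A.mod2_cases)
  have "C \<otimes>\<^bsub>mod2 A\<^esub> D = twoG A #>\<^bsub>A\<^esub> (a \<otimes>\<^bsub>A\<^esub> b)"
    unfolding CD by (simp add: hom_mult[OF A.rcos_twoG_hom ab])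
  then show "phibar (C \<otimes>\<^bsub>mod2 A\<^esub> D) = phibar C \<otimes>\<^bsub>B\<^esub> phibar D"
    using ab CD by (simp add: phibar_rcos)
qed

sublocale phibar: group_hom "mod2 A" B phibar
  using phibar_hom A.comm_group_mod2
  by (simp add: group_hom_def group_hom_axioms_def comm_group.axioms(2) B.is_group)

lemma psi_phibar: "C \<in> carrier (mod2 A) \<Longrightarrow> psi (phibar C) = \<one>\<^bsub>A\<^esub>"
  using phibar_image by (auto simp: kernel_def)

lemma phi_eq_one_iff:
  assumes a: "a \<in> carrier A"
  shows "phi a = \<one>\<^bsub>B\<^esub> \<longleftrightarrow> a \<in> twoG A"
proof
  assume "phi a = \<one>\<^bsub>B\<^esub>"
  moreover have "twoG A #>\<^bsub>A\<^esub> a \<in> carrier (mod2 A)" using a A.carrier_mod2 by simp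
  ultimately have "twoG A #>\<^bsub>A\<^esub> a = \<one>\<^bsub>mod2 A\<^esub>"
    using a phibar_inj phibar.inj_on_one_iff by (simp add: phibar_rcos)
  then show "a \<in> twoG A" using a by (simp add: A.rcos_twoG_eq_one_iff)
qed (rule phi_twoG)

lemma psi_eq_one_imp:
  assumes "b \<in> carrier B" "psi b = \<one>\<^bsub>A\<^esub>"
  obtains a where "a \<in> carrier A" "b = phi a"
proof -
  have "b \<in> phibar ` carrier (mod2 A)" using phibar_image assms by (simp add: kernel_def)
  then show ?thesis using that A.carrier_mod2 by (auto simp: phibar_rcos)
qed

lemma psi_tors2: "b \<in> carrier B \<Longrightarrow> psi b \<in> tors2 A"
  using psi_image by auto

lemma tors2_psi:
  assumes "t \<in> tors2 A"
  obtains b where "b \<in> carrier B" "psi b = t"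
  using assms psi_image[symmetric] by auto

end

lemma emd_homD:
  assumes "(f, g) \<in> emd_hom M M'"
  shows "f \<in> hom (md_A M) (md_A M')" "g \<in> hom (md_B M) (md_B M')"
    and "f \<in> extensional (carrier (md_A M))" "g \<in> extensional (carrier (md_B M))"
    and "\<And>a. a \<in> carrier (md_A M) \<Longrightarrow> g (md_phi M a) = md_phi M' (f a)"
    and "\<And>b. b \<in> carrier (md_B M) \<Longrightarrow> f (md_psi M b) = md_psi M' (g b)"
  using assms by (auto simp: emd_hom_def hom_ext_def)

lemma carrier_emd_group: "carrier (emd_group M M') = emd_hom M M'"
  by (simp add: emd_group_def)

locale exact_moore_pair = M: exact_moore M + M': exact_moore M'
  for M :: "('a, 'b) md" and M' :: "('c, 'd) md"
begin

lemma emd_homI: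
  assumes "f \<in> hom M.A M'.A" "g \<in> hom M.B M'.B"
    and "f \<in> extensional (carrier M.A)" "g \<in> extensional (carrier M.B)"
    and "\<And>a. a \<in> carrier M.A \<Longrightarrow> g (M.phi a) = M'.phi (f a)"
    and "\<And>b. b \<in> carrier M.B \<Longrightarrow> f (M.psi b) = M'.psi (g b)"
  shows "(f, g) \<in> emd_hom M M'"
  using assms by (auto simp: emd_hom_def hom_ext_def)

lemma emd_hom_mult:
  assumes p: "(f, g) \<in> emd_hom M M'" and q: "(f', g') \<in> emd_hom M M'"
  shows "(\<lambda>x\<in>carrier M.A. f x \<otimes>\<^bsub>M'.A\<^esub> f' x, \<lambda>y\<in>carrier M.B. g y \<otimes>\<^bsub>M'.B\<^esub> g' y) \<in> emd_hom M M'"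
proof (rule emd_homI)
  note P = emd_homD[OF p] and Q = emd_homD[OF q]
  show "(\<lambda>x\<in>carrier M.A. f x \<otimes>\<^bsub>M'.A\<^esub> f' x) \<in> hom M.A M'.A"
    using P(1) Q(1) by (rule M'.A.hom_restrict_mult[OF M.A.is_monoid])
  show "(\<lambda>y\<in>carrier M.B. g y \<otimes>\<^bsub>M'.B\<^esub> g' y) \<in> hom M.B M'.B"
    using P(2) Q(2) by (rule M'.B.hom_restrict_mult[OF M.B.is_monoid])
  show "(\<lambda>y\<in>carrier M.B. g y \<otimes>\<^bsub>M'.B\<^esub> g' y) (M.phi a) =
      M'.phi ((\<lambda>x\<in>carrier M.A. f x \<otimes>\<^bsub>M'.A\<^esub> f' x) a)" if "a \<in> carrier M.A" for a
    using that P(1,5) Q(1,5) by (simp add: hom_in_carrier)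
  show "(\<lambda>x\<in>carrier M.A. f x \<otimes>\<^bsub>M'.A\<^esub> f' x) (M.psi b) =
      M'.psi ((\<lambda>y\<in>carrier M.B. g y \<otimes>\<^bsub>M'.B\<^esub> g' y) b)" if "b \<in> carrier M.B" for b
    using that P(2,6) Q(2,6) by (simp add: hom_in_carrier)
qed simp_all

lemma emd_hom_inv:
  assumes p: "(f, g) \<in> emd_hom M M'"
  shows "(\<lambda>x\<in>carrier M.A. inv\<^bsub>M'.A\<^esub> f x, \<lambda>y\<in>carrier M.B. inv\<^bsub>M'.B\<^esub> g y) \<in> emd_hom M M'"
proof (rule emd_homI)
  note P = emd_homD[OF p]
  show "(\<lambda>x\<in>carrier M.A. inv\<^bsub>M'.A\<^esub> f x) \<in> hom M.A M'.A"
    using P(1) by (rule M'.A.hom_restrict_inv[OF M.A.is_monoid])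
  show "(\<lambda>y\<in>carrier M.B. inv\<^bsub>M'.B\<^esub> g y) \<in> hom M.B M'.B"
    using P(2) by (rule M'.B.hom_restrict_inv[OF M.B.is_monoid])
  show "(\<lambda>y\<in>carrier M.B. inv\<^bsub>M'.B\<^esub> g y) (M.phi a) =
      M'.phi ((\<lambda>x\<in>carrier M.A. inv\<^bsub>M'.A\<^esub> f x) a)" if "a \<in> carrier M.A" for a
    using that P(1,5) by (simp add: hom_in_carrier)
  show "(\<lambda>x\<in>carrier M.A. inv\<^bsub>M'.A\<^esub> f x) (M.psi b) =
      M'.psi ((\<lambda>y\<in>carrier M.B. inv\<^bsub>M'.B\<^esub> g y) b)" if "b \<in> carrier M.B" for b
    using that P(2,6) by (simp add: hom_in_carrier)
qed simp_all

lemma comm_group_emd_group: "comm_group (emd_group M M')"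
proof -
  have mult: "(f, g) \<otimes>\<^bsub>emd_group M M'\<^esub> (f', g') = (\<lambda>x\<in>carrier M.A. f x \<otimes>\<^bsub>M'.A\<^esub> f' x,
      \<lambda>y\<in>carrier M.B. g y \<otimes>\<^bsub>M'.B\<^esub> g' y)" for f g f' g'
    by (simp add: emd_group_def)
  have one: "\<one>\<^bsub>emd_group M M'\<^esub> = (\<lambda>x\<in>carrier M.A. \<one>\<^bsub>M'.A\<^esub>, \<lambda>y\<in>carrier M.B. \<one>\<^bsub>M'.B\<^esub>)"
    by (simp add: emd_group_def)
  show ?thesis
  proof (rule comm_groupI, unfold carrier_emd_group one, safe)
    show "(\<lambda>x\<in>carrier M.A. \<one>\<^bsub>M'.A\<^esub>, \<lambda>y\<in>carrier M.B. \<one>\<^bsub>M'.B\<^esub>) \<in> emd_hom M M'"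
      by (rule emd_homI) (auto simp: hom_def Pi_def M.psi_phi)
  next
    fix f g assume p: "(f, g) \<in> emd_hom M M'"
    let ?q = "(\<lambda>x\<in>carrier M.A. inv\<^bsub>M'.A\<^esub> f x, \<lambda>y\<in>carrier M.B. inv\<^bsub>M'.B\<^esub> g y)"
    have "?q \<otimes>\<^bsub>emd_group M M'\<^esub> (f, g) = (\<lambda>x\<in>carrier M.A. \<one>\<^bsub>M'.A\<^esub>, \<lambda>y\<in>carrier M.B. \<one>\<^bsub>M'.B\<^esub>)"
      using emd_homD(1,2)[OF p] by (auto simp: mult hom_in_carrier intro!: restrict_ext)
    then show "\<exists>q\<in>emd_hom M M'. q \<otimes>\<^bsub>emd_group M M'\<^esub> (f, g) =
        (\<lambda>x\<in>carrier M.A. \<one>\<^bsub>M'.A\<^esub>, \<lambda>y\<in>carrier M.B. \<one>\<^bsub>M'.B\<^esub>)"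
      using emd_hom_inv[OF p] by blast
  qed (auto simp: mult emd_hom_mult emd_hom_def hom_ext_def hom_def Pi_def extensional_def
      M'.A.m_ac M'.B.m_ac intro!: restrict_ext ext)
qed

end

section \<open>Fullness\<close>

context exact_moore_pair
begin

text \<open>A partial lift of \<open>f\<close> is encoded by its graph, a subgroup of \<open>B \<times> B'\<close>; it is
  single-valued because it meets \<open>1 \<times> B'\<close> trivially.\<close>

definition partial_lifts :: "('a \<Rightarrow> 'c) \<Rightarrow> ('b \<times> 'd) set set" where
  "partial_lifts f = {\<Gamma>. subgroup \<Gamma> (M.B \<times>\<times> M'.B) \<and> (\<forall>y. (\<one>\<^bsub>M.B\<^esub>, y) \<in> \<Gamma> \<longrightarrow> y = \<one>\<^bsub>M'.B\<^esub>) \<and>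
     (\<lambda>a. (M.phi a, M'.phi (f a))) ` carrier M.A \<subseteq> \<Gamma> \<and>
     (\<forall>(x, y) \<in> \<Gamma>. M'.psi y = f (M.psi x))}"

sublocale BB': comm_group "M.B \<times>\<times> M'.B"
  by (rule DirProd_comm_group[OF M.B.comm_group_axioms M'.B.comm_group_axioms])

lemma partial_lift_functional:
  assumes \<Gamma>: "\<Gamma> \<in> partial_lifts f" and xy: "(x, y) \<in> \<Gamma>" and xz: "(x, z) \<in> \<Gamma>"
  shows "y = z"
proof -
  interpret \<Gamma>: subgroup \<Gamma> "M.B \<times>\<times> M'.B" using \<Gamma> by (simp add: partial_lifts_def)
  have c: "x \<in> carrier M.B" "y \<in> carrier M'.B" "z \<in> carrier M'.B"
    using \<Gamma>.subset xy xz by auto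
  have "(x, y) \<otimes>\<^bsub>M.B \<times>\<times> M'.B\<^esub> inv\<^bsub>M.B \<times>\<times> M'.B\<^esub> (x, z) \<in> \<Gamma>"
    using xy xz by simp
  then have "(\<one>\<^bsub>M.B\<^esub>, y \<otimes>\<^bsub>M'.B\<^esub> inv\<^bsub>M'.B\<^esub> z) \<in> \<Gamma>"
    using c by (simp add: M.B.is_group M'.B.is_group)
  then have "y \<otimes>\<^bsub>M'.B\<^esub> inv\<^bsub>M'.B\<^esub> z = \<one>\<^bsub>M'.B\<^esub>"
    using \<Gamma> by (simp add: partial_lifts_def)
  moreover have "y = (y \<otimes>\<^bsub>M'.B\<^esub> inv\<^bsub>M'.B\<^esub> z) \<otimes>\<^bsub>M'.B\<^esub> z"
    using c by (simp add: M'.B.m_assoc)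
  ultimately show ?thesis using c by simp
qed

lemma graph_in_partial_lifts:
  assumes f: "f \<in> hom M.A M'.A"
  shows "(\<lambda>a. (M.phi a, M'.phi (f a))) ` carrier M.A \<in> partial_lifts f"
proof -
  let ?h = "\<lambda>a. (M.phi a, M'.phi (f a))"
  interpret f: group_hom M.A M'.A f
    using f by (simp add: group_hom_def group_hom_axioms_def M.A.is_group M'.A.is_group)
  interpret h: group_hom M.A "M.B \<times>\<times> M'.B" ?h
    by (auto simp: group_hom_def group_hom_axioms_def M.A.is_group BB'.is_group hom_def)
  have "y = \<one>\<^bsub>M'.B\<^esub>" if "a \<in> carrier M.A" "M.phi a = \<one>\<^bsub>M.B\<^esub>" "y = M'.phi (f a)" for a y
    using that hom_twoG[OF f] by (simp add: M.phi_eq_one_iff M'.phi_twoG)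
  then show ?thesis
    unfolding partial_lifts_def using h.img_is_subgroup by (auto simp: M.psi_phi M'.psi_phi)
qed

lemma Union_chain_in_partial_lifts:
  assumes f: "f \<in> hom M.A M'.A" and \<C>: "\<C> \<in> chains (partial_lifts f)"
  shows "\<exists>\<Delta>\<in>partial_lifts f. \<forall>\<Gamma>\<in>\<C>. \<Gamma> \<subseteq> \<Delta>"
proof (cases "\<C> = {}")
  case True
  then show ?thesis using graph_in_partial_lifts[OF f] by blast
next
  case False
  have sub: "\<C> \<subseteq> partial_lifts f" and ch: "subset.chain {H. subgroup H (M.B \<times>\<times> M'.B)} \<C>"
    using \<C> by (auto simp: chains_def chain_subset_def subset_chain_def partial_lifts_def)
  have "\<Union>\<C> \<in> partial_lifts f"
    unfolding partial_lifts_def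
    using BB'.subgroup_Union_chain[OF ch False] sub False
    by (auto simp: partial_lifts_def)
  then show ?thesis by blast
qed

text \<open>Adjoining \<open>b \<mapsto> b'\<close> to a partial lift works because \<open>2b = phi (psi b)\<close> is already in its
  domain, and \<open>2b' = phi' (psi' b') = phi' (f (psi b))\<close> is the prescribed value there.\<close>

lemma partial_lift_extend:
  assumes f: "f \<in> hom M.A M'.A" and \<Gamma>: "\<Gamma> \<in> partial_lifts f" and nb: "\<nexists>y. (b, y) \<in> \<Gamma>"
    and b: "b \<in> carrier M.B" and b': "b' \<in> carrier M'.B" "M'.psi b' = f (M.psi b)"
  shows "\<Gamma> \<union> (\<Gamma> #>\<^bsub>M.B \<times>\<times> M'.B\<^esub> (b, b')) \<in> partial_lifts f"
proof -
  interpret \<Gamma>: subgroup \<Gamma> "M.B \<times>\<times> M'.B" using \<Gamma> by (simp add: partial_lifts_def)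
  interpret f: group_hom M.A M'.A f
    using f by (simp add: group_hom_def group_hom_axioms_def M.A.is_group M'.A.is_group)
  have coset: "p \<in> \<Gamma> #>\<^bsub>M.B \<times>\<times> M'.B\<^esub> (b, b') \<longleftrightarrow>
      (\<exists>x y. (x, y) \<in> \<Gamma> \<and> p = (x \<otimes>\<^bsub>M.B\<^esub> b, y \<otimes>\<^bsub>M'.B\<^esub> b'))" for p
  proof
    assume "p \<in> \<Gamma> #>\<^bsub>M.B \<times>\<times> M'.B\<^esub> (b, b')"
    then obtain x y where "(x, y) \<in> \<Gamma>" "p = (x, y) \<otimes>\<^bsub>M.B \<times>\<times> M'.B\<^esub> (b, b')"
      unfolding r_coset_def by auto
    then show "\<exists>x y. (x, y) \<in> \<Gamma> \<and> p = (x \<otimes>\<^bsub>M.B\<^esub> b, y \<otimes>\<^bsub>M'.B\<^esub> b')" by auto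
  qed (auto simp: r_coset_def intro!: bexI[of _ "(_, _)"])
  have "(M.phi (M.psi b), M'.phi (f (M.psi b))) \<in> \<Gamma>"
    using \<Gamma> b by (auto simp: partial_lifts_def)
  then have sq: "(b, b') \<otimes>\<^bsub>M.B \<times>\<times> M'.B\<^esub> (b, b') \<in> \<Gamma>"
    using b b' by (simp add: M.phi_psi flip: M'.phi_psi)
  show ?thesis
    unfolding partial_lifts_def
  proof (intro CollectI conjI allI impI)
    show "subgroup (\<Gamma> \<union> (\<Gamma> #>\<^bsub>M.B \<times>\<times> M'.B\<^esub> (b, b'))) (M.B \<times>\<times> M'.B)"
      using b b' sq by (intro BB'.subgroup_Un_rcos) (simp_all add: \<Gamma>.subgroup_axioms)
    show "(\<lambda>a. (M.phi a, M'.phi (f a))) ` carrier M.A \<subseteq> \<Gamma> \<union> (\<Gamma> #>\<^bsub>M.B \<times>\<times> M'.B\<^esub> (b, b'))"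
      using \<Gamma> by (auto simp: partial_lifts_def)
  next
    fix y assume "(\<one>\<^bsub>M.B\<^esub>, y) \<in> \<Gamma> \<union> (\<Gamma> #>\<^bsub>M.B \<times>\<times> M'.B\<^esub> (b, b'))"
    moreover have False if "(x, z) \<in> \<Gamma>" "\<one>\<^bsub>M.B\<^esub> = x \<otimes>\<^bsub>M.B\<^esub> b" for x z
    proof -
      have c: "x \<in> carrier M.B" "z \<in> carrier M'.B" using that(1) \<Gamma>.subset by auto
      then have "x = inv\<^bsub>M.B\<^esub> b" using that(2) b by (simp add: M.B.inv_char M.B.m_comm)
      then have "(b, inv\<^bsub>M'.B\<^esub> z) \<in> \<Gamma>"
        using \<Gamma>.m_inv_closed[OF that(1)] c b by (simp add: M.B.is_group M'.B.is_group)
      then show False using nb by blast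
    qed
    ultimately show "y = \<one>\<^bsub>M'.B\<^esub>" using \<Gamma> by (auto simp: coset partial_lifts_def)
  next
    show "\<forall>(x, y) \<in> \<Gamma> \<union> (\<Gamma> #>\<^bsub>M.B \<times>\<times> M'.B\<^esub> (b, b')). M'.psi y = f (M.psi x)"
      using \<Gamma> \<Gamma>.subset b b' by (fastforce simp: coset partial_lifts_def)
  qed
qed

lemma maximal_partial_lift_total:
  assumes f: "f \<in> hom M.A M'.A" and \<Gamma>: "\<Gamma> \<in> partial_lifts f"
    and max: "\<forall>\<Delta>\<in>partial_lifts f. \<Gamma> \<subseteq> \<Delta> \<longrightarrow> \<Delta> = \<Gamma>" and b: "b \<in> carrier M.B"
  shows "\<exists>y. (b, y) \<in> \<Gamma>"
proof (rule ccontr)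
  assume nb: "\<nexists>y. (b, y) \<in> \<Gamma>"
  have "f (M.psi b) \<in> tors2 M'.A"
    using hom_tors2[OF f M.A.is_group M'.A.is_group M.psi_tors2[OF b]] .
  then obtain b' where b': "b' \<in> carrier M'.B" "M'.psi b' = f (M.psi b)" by (rule M'.tors2_psi)
  have "subgroup \<Gamma> (M.B \<times>\<times> M'.B)" using \<Gamma> by (simp add: partial_lifts_def)
  then have "(\<one>\<^bsub>M.B\<^esub>, \<one>\<^bsub>M'.B\<^esub>) \<in> \<Gamma>" using subgroup.one_closed by fastforce
  then have "(b, b') \<in> \<Gamma> #>\<^bsub>M.B \<times>\<times> M'.B\<^esub> (b, b')"
    using b b' by (auto simp: r_coset_def intro!: bexI[of _ "(\<one>\<^bsub>M.B\<^esub>, \<one>\<^bsub>M'.B\<^esub>)"])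
  then show False
    using max partial_lift_extend[OF f \<Gamma> nb b b'] nb by blast
qed

lemma exists_emd_hom:
  assumes f: "f \<in> hom_ext M.A M'.A"
  shows "\<exists>g. (f, g) \<in> emd_hom M M'"
proof -
  have fh: "f \<in> hom M.A M'.A" using f by (simp add: hom_ext_def)
  obtain \<Gamma> where \<Gamma>: "\<Gamma> \<in> partial_lifts f" and max: "\<forall>\<Delta>\<in>partial_lifts f. \<Gamma> \<subseteq> \<Delta> \<longrightarrow> \<Delta> = \<Gamma>"
    using Zorn_Lemma2[OF ballI[OF Union_chain_in_partial_lifts[OF fh]]] by blast
  interpret \<Gamma>: subgroup \<Gamma> "M.B \<times>\<times> M'.B" using \<Gamma> by (simp add: partial_lifts_def)
  define g where "g = (\<lambda>x\<in>carrier M.B. THE y. (x, y) \<in> \<Gamma>)"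
  have g_eq: "g x = y" if "(x, y) \<in> \<Gamma>" for x y
    using that \<Gamma>.subset partial_lift_functional[OF \<Gamma>] by (auto simp: g_def)
  have in_graph: "(x, g x) \<in> \<Gamma>" if "x \<in> carrier M.B" for x
    using maximal_partial_lift_total[OF fh \<Gamma> max that] g_eq by blast
  have "g \<in> hom M.B M'.B"
  proof (rule homI)
    show "g x \<in> carrier M'.B" if "x \<in> carrier M.B" for x
      using in_graph[OF that] \<Gamma>.subset by auto
    show "g (x \<otimes>\<^bsub>M.B\<^esub> y) = g x \<otimes>\<^bsub>M'.B\<^esub> g y" if "x \<in> carrier M.B" "y \<in> carrier M.B" for x y
      using \<Gamma>.m_closed[OF in_graph[OF that(1)] in_graph[OF that(2)]] by (simp add: g_eq)
  qed
  moreover have "g (M.phi a) = M'.phi (f a)" if "a \<in> carrier M.A" for a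
    using that \<Gamma> by (intro g_eq) (auto simp: partial_lifts_def)
  moreover have "f (M.psi b) = M'.psi (g b)" if "b \<in> carrier M.B" for b
    using in_graph[OF that] \<Gamma> by (auto simp: partial_lifts_def)
  ultimately have "(f, g) \<in> emd_hom M M'"
    using f by (intro emd_homI) (auto simp: hom_ext_def g_def)
  then show ?thesis by blast
qed

end

section \<open>Reflecting isomorphisms\<close>

context exact_moore_pair
begin

lemma emd_hom_snd_trivial_kernel:
  assumes p: "(f, g) \<in> emd_hom M M'" and f: "f \<in> iso M.A M'.A"
    and b: "b \<in> carrier M.B" "g b = \<one>\<^bsub>M'.B\<^esub>"
  shows "b = \<one>\<^bsub>M.B\<^esub>"
proof -
  note P = emd_homD[OF p]
  interpret f: group_hom M.A M'.A f
    using P(1) by (simp add: group_hom_def group_hom_axioms_def M.A.is_group M'.A.is_group)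
  have "f (M.psi b) = \<one>\<^bsub>M'.A\<^esub>" using P(6) b by simp
  then have "M.psi b = \<one>\<^bsub>M.A\<^esub>" using f b f.inj_on_one_iff by (simp add: iso_def bij_betw_def)
  then obtain a where a: "a \<in> carrier M.A" "b = M.phi a" by (rule M.psi_eq_one_imp[OF b(1)])
  then have "M'.phi (f a) = \<one>\<^bsub>M'.B\<^esub>" using P(5) b by simp
  then have "a \<in> twoG M.A"
    using a iso_twoG_iff[OF f M.A.is_monoid] by (simp add: M'.phi_eq_one_iff)
  then show ?thesis using a by (simp add: M.phi_twoG)
qed

lemma emd_hom_snd_onto:
  assumes p: "(f, g) \<in> emd_hom M M'" and f: "f \<in> iso M.A M'.A" and b': "b' \<in> carrier M'.B"
  shows "b' \<in> g ` carrier M.B"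
proof -
  note P = emd_homD[OF p]
  have f_onto: "carrier M'.A = f ` carrier M.A" using f by (auto simp: iso_def bij_betw_def)
  obtain t where t: "t \<in> carrier M.A" "f t = M'.psi b'"
    using b' f_onto by (metis M'.psi.hom_closed imageE)
  moreover have "f t \<in> tors2 M'.A" using t b' M'.psi_tors2 by simp
  ultimately have "t \<in> tors2 M.A"
    using iso_tors2_iff[OF f M.A.is_group M'.A.is_group] by blast
  then obtain b where b: "b \<in> carrier M.B" "M.psi b = t" by (rule M.tors2_psi)
  define c where "c = b' \<otimes>\<^bsub>M'.B\<^esub> inv\<^bsub>M'.B\<^esub> g b"
  have c: "c \<in> carrier M'.B" using b b' P(2) by (simp add: c_def hom_in_carrier)
  have "M'.psi (g b) = M'.psi b'" using P(6)[OF b(1)] b t by simp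
  then have "M'.psi c = \<one>\<^bsub>M'.A\<^esub>" using b b' P(2) by (simp add: c_def hom_in_carrier)
  then obtain a' where a': "a' \<in> carrier M'.A" "c = M'.phi a'" by (rule M'.psi_eq_one_imp[OF c])
  then obtain a where a: "a \<in> carrier M.A" "a' = f a" using f_onto by blast
  have "g (M.phi a \<otimes>\<^bsub>M.B\<^esub> b) = c \<otimes>\<^bsub>M'.B\<^esub> g b"
    using a a' b P(2,5) by (simp add: hom_mult)
  also have "\<dots> = b'" using b b' P(2) by (simp add: c_def M'.B.m_assoc hom_in_carrier)
  finally show ?thesis using a b by (metis M.B.m_closed M.phi.hom_closed image_eqI)
qed

lemma emd_hom_snd_iso:
  assumes p: "(f, g) \<in> emd_hom M M'" and f: "f \<in> iso M.A M'.A"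
  shows "g \<in> iso M.B M'.B"
proof -
  interpret g: group_hom M.B M'.B g
    using emd_homD(2)[OF p] by (simp add: group_hom_def group_hom_axioms_def M.B.is_group M'.B.is_group)
  show ?thesis
    using emd_hom_snd_trivial_kernel[OF p f] emd_hom_snd_onto[OF p f] by (auto simp: g.iso_iff)
qed

lemma emd_hom_inverse:
  assumes p: "(f, g) \<in> emd_hom M M'" and f: "f \<in> iso M.A M'.A" and g: "g \<in> iso M.B M'.B"
  defines "f' \<equiv> \<lambda>x\<in>carrier M'.A. inv_into (carrier M.A) f x"
    and "g' \<equiv> \<lambda>y\<in>carrier M'.B. inv_into (carrier M.B) g y"
  shows "(f', g') \<in> emd_hom M' M"
    and "emd_comp M (f', g') (f, g) = emd_id M" and "emd_comp M' (f, g) (f', g') = emd_id M'"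
proof -
  note P = emd_homD[OF p]
  have f_bij: "bij_betw f (carrier M.A) (carrier M'.A)" and g_bij: "bij_betw g (carrier M.B) (carrier M'.B)"
    using f g by (auto simp: iso_def)
  have "inv_into (carrier M.A) f \<in> hom M'.A M.A" using M.A.iso_set_sym[OF f] by (simp add: iso_def)
  then have f': "f' \<in> hom M'.A M.A" by (rule M'.A.hom_restrict) (simp add: f'_def)
  have "inv_into (carrier M.B) g \<in> hom M'.B M.B" using M.B.iso_set_sym[OF g] by (simp add: iso_def)
  then have g': "g' \<in> hom M'.B M.B" by (rule M'.B.hom_restrict) (simp add: g'_def)
  have ff': "f (f' x) = x" "f' x \<in> carrier M.A" if "x \<in> carrier M'.A" for x
    using that f_bij by (auto simp: f'_def bij_betw_def f_inv_into_f inv_into_into)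
  have gg': "g (g' y) = y" "g' y \<in> carrier M.B" if "y \<in> carrier M'.B" for y
    using that g_bij by (auto simp: g'_def bij_betw_def f_inv_into_f inv_into_into)
  have f'f: "f' (f x) = x" if "x \<in> carrier M.A" for x
    using that f_bij P(1) by (auto simp: f'_def bij_betw_def hom_in_carrier)
  have g'g: "g' (g y) = y" if "y \<in> carrier M.B" for y
    using that g_bij P(2) by (auto simp: g'_def bij_betw_def hom_in_carrier)
  show "(f', g') \<in> emd_hom M' M"
  proof (rule exact_moore_pair.emd_homI[OF exact_moore_pair.intro[OF M'.exact_moore_axioms M.exact_moore_axioms] f' g'])
    show "f' \<in> extensional (carrier M'.A)" "g' \<in> extensional (carrier M'.B)"
      by (simp_all add: f'_def g'_def)
    show "g' (M'.phi a) = M.phi (f' a)" if "a \<in> carrier M'.A" for a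
      using that P(5) ff' g'g by (metis M.phi.hom_closed)
    show "f' (M'.psi b) = M.psi (g' b)" if "b \<in> carrier M'.B" for b
      using that P(6) gg' f'f by (metis M.psi.hom_closed)
  qed
  show "emd_comp M (f', g') (f, g) = emd_id M"
    using f'f g'g by (auto simp: emd_comp_def emd_id_def compose_def intro!: restrict_ext)
  show "emd_comp M' (f, g) (f', g') = emd_id M'"
    using ff' gg' by (auto simp: emd_comp_def emd_id_def compose_def intro!: restrict_ext)
qed

end

lemma (in exact_moore_pair) alpha_reflects_iso:
  assumes p: "p \<in> emd_hom M M'" and iso: "md_alpha p \<in> iso M.A M'.A"
  shows "\<exists>q\<in>emd_hom M' M. emd_comp M q p = emd_id M \<and> emd_comp M' p q = emd_id M'"
proof -
  obtain f g where fg: "p = (f, g)" by (cases p)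
  then have "f \<in> iso M.A M'.A" "g \<in> iso M.B M'.B"
    using iso p emd_hom_snd_iso by (auto simp: md_alpha_def)
  then show ?thesis using emd_hom_inverse p fg by blast
qed

section \<open>The exact sequence of morphism groups\<close>

lemma (in exact_moore) psi_hom_tors2_grp: "psi \<in> hom B (tors2_grp A)"
  using psi_tors2 by (auto simp: hom_def A.carrier_tors2_grp mult_tors2_grp)

lemma (in exact_moore) group_tors2_grp: "group (tors2_grp A)"
  by (simp add: tors2_grp_def)

context exact_moore_pair
begin

lemma comm_group_hom_group_tors2_mod2: "comm_group (hom_group (tors2_grp M.A) (mod2 M'.A))"
  by (rule abelian.comm_group_hom_group[OF abelian.intro[OF M'.A.comm_group_mod2]])
     (simp add: M.group_tors2_grp group.is_monoid)

lemma comm_group_hom_group_A: "comm_group (hom_group M.A M'.A)"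
  by (rule M'.A.comm_group_hom_group[OF M.A.is_monoid])

lemma emd_iota_mem:
  assumes h: "h \<in> hom_ext (tors2_grp M.A) (mod2 M'.A)"
  shows "emd_iota M M' h \<in> emd_hom M M'"
proof -
  interpret h: group_hom "tors2_grp M.A" "mod2 M'.A" h
    using h M'.A.comm_group_mod2
    by (simp add: hom_ext_def group_hom_def group_hom_axioms_def M.group_tors2_grp comm_group.axioms(2))
  have "(\<lambda>y\<in>carrier M.B. M'.phibar (h (M.psi y))) \<in> hom M.B M'.B"
  proof (rule homI)
    fix x y assume xy: "x \<in> carrier M.B" "y \<in> carrier M.B"
    then have "M.psi (x \<otimes>\<^bsub>M.B\<^esub> y) = M.psi x \<otimes>\<^bsub>tors2_grp M.A\<^esub> M.psi y"
      by (simp add: mult_tors2_grp)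
    then have "h (M.psi (x \<otimes>\<^bsub>M.B\<^esub> y)) = h (M.psi x) \<otimes>\<^bsub>mod2 M'.A\<^esub> h (M.psi y)"
      using xy M.psi_tors2 by (simp add: M.A.carrier_tors2_grp)
    then show "(\<lambda>y\<in>carrier M.B. M'.phibar (h (M.psi y))) (x \<otimes>\<^bsub>M.B\<^esub> y) =
        (\<lambda>y\<in>carrier M.B. M'.phibar (h (M.psi y))) x \<otimes>\<^bsub>M'.B\<^esub> (\<lambda>y\<in>carrier M.B. M'.phibar (h (M.psi y))) y"
      using xy M.psi_tors2 by (simp add: M.A.carrier_tors2_grp)
  qed (simp add: M.psi_tors2 M.A.carrier_tors2_grp)
  then show ?thesis
    unfolding emd_iota_def
    using h.hom_one by (intro emd_homI)
      (auto simp: hom_def M.psi_phi M'.psi_phibar M.A.carrier_tors2_grp M.psi_tors2 one_tors2_grp)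
qed

lemma emd_iota_hom: "emd_iota M M' \<in> hom (hom_group (tors2_grp M.A) (mod2 M'.A)) (emd_group M M')"
proof (rule homI)
  fix h1 h2 assume "h1 \<in> carrier (hom_group (tors2_grp M.A) (mod2 M'.A))"
    "h2 \<in> carrier (hom_group (tors2_grp M.A) (mod2 M'.A))"
  then have "h1 t \<in> carrier (mod2 M'.A)" "h2 t \<in> carrier (mod2 M'.A)" if "t \<in> tors2 M.A" for t
    using that by (auto simp: hom_group_def hom_ext_def hom_def M.A.carrier_tors2_grp)
  then show "emd_iota M M' (h1 \<otimes>\<^bsub>hom_group (tors2_grp M.A) (mod2 M'.A)\<^esub> h2) =
      emd_iota M M' h1 \<otimes>\<^bsub>emd_group M M'\<^esub> emd_iota M M' h2"
    by (auto simp: emd_iota_def emd_group_def hom_group_def M.A.carrier_tors2_grp M.psi_tors2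
        M'.phibar.hom_mult intro!: restrict_ext)
qed (simp add: emd_iota_mem hom_group_def carrier_emd_group)

lemma inj_emd_iota: "inj_on (emd_iota M M') (carrier (hom_group (tors2_grp M.A) (mod2 M'.A)))"
proof (rule inj_onI)
  fix h1 h2 assume "h1 \<in> carrier (hom_group (tors2_grp M.A) (mod2 M'.A))"
    "h2 \<in> carrier (hom_group (tors2_grp M.A) (mod2 M'.A))"
  then have h: "h1 \<in> extensional (tors2 M.A)" "h2 \<in> extensional (tors2 M.A)"
    "\<And>t. t \<in> tors2 M.A \<Longrightarrow> h1 t \<in> carrier (mod2 M'.A) \<and> h2 t \<in> carrier (mod2 M'.A)"
    by (auto simp: hom_group_def hom_ext_def hom_def M.A.carrier_tors2_grp)
  assume eq: "emd_iota M M' h1 = emd_iota M M' h2"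
  show "h1 = h2"
  proof (rule extensionalityI[OF h(1,2)])
    fix t assume t: "t \<in> tors2 M.A"
    then obtain b where b: "b \<in> carrier M.B" "M.psi b = t" by (rule M.tors2_psi)
    have "M'.phibar (h1 t) = M'.phibar (h2 t)"
      using fun_cong[OF arg_cong[OF eq, of snd], of b] b by (simp add: emd_iota_def)
    then show "h1 t = h2 t" using M'.phibar_inj h(3)[OF t] by (auto dest: inj_onD)
  qed
qed

lemma md_alpha_hom: "md_alpha \<in> hom (emd_group M M') (hom_group M.A M'.A)"
  by (rule homI) (auto simp: emd_group_def hom_group_def md_alpha_def emd_hom_def)

lemma md_alpha_onto: "md_alpha ` carrier (emd_group M M') = carrier (hom_group M.A M'.A)"
proof
  show "carrier (hom_group M.A M'.A) \<subseteq> md_alpha ` carrier (emd_group M M')"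
  proof
    fix f assume "f \<in> carrier (hom_group M.A M'.A)"
    then obtain g where "(f, g) \<in> emd_hom M M'"
      using exists_emd_hom by (auto simp: hom_group_def)
    then show "f \<in> md_alpha ` carrier (emd_group M M')"
      by (force simp: carrier_emd_group md_alpha_def)
  qed
qed (auto simp: emd_group_def hom_group_def md_alpha_def emd_hom_def)

text \<open>A morphism with trivial first component kills \<open>phi ` A = ker psi\<close> and lands in
  \<open>ker psi' = phibar' ` (A'/2)\<close>, so it factors as \<open>phibar' \<circ> h \<circ> psi\<close>.\<close>

lemma emd_hom_factor:
  assumes pg: "(\<lambda>x\<in>carrier M.A. \<one>\<^bsub>M'.A\<^esub>, g) \<in> emd_hom M M'"
  obtains h where "h \<in> hom_ext (tors2_grp M.A) (mod2 M'.A)"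
    "\<And>b. b \<in> carrier M.B \<Longrightarrow> g b = M'.phibar (h (M.psi b))"
proof -
  note G = emd_homD[OF pg]
  have "g ` carrier M.B \<subseteq> M'.phibar ` carrier (mod2 M'.A)"
    using G(2,6) by (auto simp: M'.phibar_image kernel_def hom_in_carrier)
  then obtain k where k: "k \<in> hom M.B (mod2 M'.A)" "\<And>b. b \<in> carrier M.B \<Longrightarrow> g b = M'.phibar (k b)"
    using M'.phibar.factor_through_inj[OF M'.phibar_inj M.B.is_monoid G(2)] by blast
  interpret psi: group_hom M.B "tors2_grp M.A" M.psi
    by (simp add: group_hom_def group_hom_axioms_def M.B.is_group M.group_tors2_grp M.psi_hom_tors2_grp)
  have "k b = \<one>\<^bsub>mod2 M'.A\<^esub>" if b: "b \<in> carrier M.B" "M.psi b = \<one>\<^bsub>tors2_grp M.A\<^esub>" for b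
  proof -
    obtain a where a: "a \<in> carrier M.A" "b = M.phi a"
      using M.psi_eq_one_imp[OF b(1)] b(2) by (auto simp: one_tors2_grp)
    have "M'.phibar (k b) = \<one>\<^bsub>M'.B\<^esub>" using a G(5) k(2) by simp
    moreover have "k b \<in> carrier (mod2 M'.A)" using k(1) b(1) by (simp add: hom_in_carrier)
    ultimately show ?thesis using M'.phibar_inj M'.phibar.inj_on_one_iff by simp
  qed
  then obtain h where "h \<in> hom (tors2_grp M.A) (mod2 M'.A)" "h \<in> extensional (tors2 M.A)"
    and "\<And>b. b \<in> carrier M.B \<Longrightarrow> k b = h (M.psi b)"
    using psi.factor_through_surj[OF _ k(1) M'.A.comm_group_mod2[THEN comm_group.axioms(2)]]
      M.psi_image by (auto simp: M.A.carrier_tors2_grp)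
  then show ?thesis
    using that k(2) by (simp add: hom_ext_def M.A.carrier_tors2_grp)
qed

lemma emd_iota_image:
  "emd_iota M M' ` carrier (hom_group (tors2_grp M.A) (mod2 M'.A)) =
    kernel (emd_group M M') (hom_group M.A M'.A) md_alpha"
proof
  show "emd_iota M M' ` carrier (hom_group (tors2_grp M.A) (mod2 M'.A)) \<subseteq>
      kernel (emd_group M M') (hom_group M.A M'.A) md_alpha"
    using emd_iota_mem
    by (auto simp: kernel_def hom_group_def carrier_emd_group md_alpha_def emd_iota_def)
next
  show "kernel (emd_group M M') (hom_group M.A M'.A) md_alpha \<subseteq>
      emd_iota M M' ` carrier (hom_group (tors2_grp M.A) (mod2 M'.A))"
  proof
    fix p assume "p \<in> kernel (emd_group M M') (hom_group M.A M'.A) md_alpha"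
    then obtain g where p: "p = (\<lambda>x\<in>carrier M.A. \<one>\<^bsub>M'.A\<^esub>, g)"
      and pg: "(\<lambda>x\<in>carrier M.A. \<one>\<^bsub>M'.A\<^esub>, g) \<in> emd_hom M M'"
      by (cases p) (auto simp: kernel_def carrier_emd_group md_alpha_def hom_group_def)
    obtain h where h: "h \<in> hom_ext (tors2_grp M.A) (mod2 M'.A)"
      and gh: "\<And>b. b \<in> carrier M.B \<Longrightarrow> g b = M'.phibar (h (M.psi b))"
      using emd_hom_factor[OF pg] by blast
    have "emd_iota M M' h = p"
      unfolding p emd_iota_def using emd_homD(4)[OF pg] gh
      by (auto intro!: extensionalityI[OF _ emd_homD(4)[OF pg]])
    then show "p \<in> emd_iota M M' ` carrier (hom_group (tors2_grp M.A) (mod2 M'.A))"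
      using h by (auto simp: hom_group_def)
  qed
qed

end

section \<open>Essential surjectivity\<close>

text \<open>Defined on all of \<open>G[2]\<close>, such a form is the twisting cocycle of an extension of \<open>G[2]\<close>
  by \<open>G/2\<close> in which \<open>2b\<close> is the class of \<open>psi b\<close>; it exists by Zorn's lemma.\<close>

definition diagonal_form :: "'a monoid \<Rightarrow> 'a set \<Rightarrow> ('a \<Rightarrow> 'a \<Rightarrow> 'a) \<Rightarrow> bool" where
  "diagonal_form G U m \<longleftrightarrow> subgroup U G \<and> U \<subseteq> tors2 G \<and> (\<forall>x\<in>U. m x x = x) \<and>
     (\<forall>x\<in>U. \<forall>y\<in>U. m x y \<in> tors2 G \<and> m x y = m y x) \<and>
     (\<forall>x\<in>U. \<forall>y\<in>U. \<forall>z\<in>U. m (x \<otimes>\<^bsub>G\<^esub> y) z = m x z \<otimes>\<^bsub>G\<^esub> m y z)"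

definition form_graph :: "'a set \<Rightarrow> ('a \<Rightarrow> 'a \<Rightarrow> 'a) \<Rightarrow> (('a \<times> 'a) \<times> 'a) set" where
  "form_graph U m = {((x, y), m x y) | x y. x \<in> U \<and> y \<in> U}"

lemma mem_form_graph: "((x, y), z) \<in> form_graph U m \<longleftrightarrow> x \<in> U \<and> y \<in> U \<and> z = m x y"
  by (auto simp: form_graph_def)

lemma diagonal_form_graph_diag:
  "diagonal_form G U m \<Longrightarrow> ((x, x), x) \<in> form_graph U m \<longleftrightarrow> x \<in> U"
  by (auto simp: diagonal_form_def mem_form_graph)

context abelian
begin

lemma diagonal_form_one: "diagonal_form G {\<one>} (\<lambda>_ _. \<one>)"
  by (auto simp: diagonal_form_def tors2_def intro: subgroupI)

lemma diagonal_formD: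
  assumes "diagonal_form G U m"
  shows "subgroup U G" "U \<subseteq> tors2 G" "\<And>x. x \<in> U \<Longrightarrow> m x x = x"
    "\<And>x y. x \<in> U \<Longrightarrow> y \<in> U \<Longrightarrow> m x y \<in> tors2 G"
    "\<And>x y. x \<in> U \<Longrightarrow> y \<in> U \<Longrightarrow> m x y = m y x"
    "\<And>x y z. x \<in> U \<Longrightarrow> y \<in> U \<Longrightarrow> z \<in> U \<Longrightarrow> m (x \<otimes> y) z = m x z \<otimes> m y z"
  using assms by (auto simp: diagonal_form_def)

lemma diagonal_form_extend:
  assumes m: "diagonal_form G U m" and t: "t \<in> tors2 G" "t \<notin> U"
  obtains m' where "diagonal_form G (U \<union> (U #> t)) m'" "\<And>x y. x \<in> U \<Longrightarrow> y \<in> U \<Longrightarrow> m' x y = m x y"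
proof -
  note U = diagonal_formD[OF m]
  have tc: "t \<in> carrier G" and tt: "t \<otimes> t = \<one>" using t by (auto simp: tors2_def)
  let ?U' = "U \<union> (U #> t)"
  define tp where "tp b = (if b then t else \<one>)" for b
  define hi where "hi x = (x \<notin> U)" for x
  define lo where "lo x = (if x \<in> U then x else x \<otimes> t)" for x
  note decompose = Un_rcos_decompose[OF U(1) tc tt t(2), folded lo_def tp_def hi_def]
  have tp_c: "tp b \<in> carrier G" and tp_tors2: "tp b \<in> tors2 G" for b
    using t tc by (auto simp: tp_def tors2_def)
  text \<open>Writing \<open>x = u + a t\<close> with \<open>u \<in> U\<close>, the extension is \<open>m' (u + a t) (v + b t) = m u v + a b t\<close>.\<close>
  define m' where "m' x y = m (lo x) (lo y) \<otimes> tp (hi x \<and> hi y)" for x y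
  have "diagonal_form G ?U' m'"
    unfolding diagonal_form_def
  proof (intro conjI ballI)
    show "subgroup ?U' G" using tc tt subgroup.one_closed[OF U(1)] by (intro subgroup_Un_rcos[OF U(1)]) simp_all
    show "?U' \<subseteq> tors2 G"
      using U(2) t by (auto simp: r_coset_def intro!: subgroup.m_closed[OF subgroup_tors2])
    show "m' x x = x" if "x \<in> ?U'" for x
      using decompose(1)[OF that] U(3) by (simp add: m'_def)
    show "m' x y \<in> tors2 G" if "x \<in> ?U'" "y \<in> ?U'" for x y
      using that decompose(1) U(4) tp_tors2 by (simp add: m'_def subgroup.m_closed[OF subgroup_tors2])
    show "m' x y = m' y x" if "x \<in> ?U'" "y \<in> ?U'" for x y
      using that decompose(1) U(5) by (simp add: m'_def conj_commute)
    show "m' (x \<otimes> y) z = m' x z \<otimes> m' y z" if "x \<in> ?U'" "y \<in> ?U'" "z \<in> ?U'" for x y z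
    proof -
      have tp_xyz: "tp ((hi x \<noteq> hi y) \<and> hi z) = tp (hi x \<and> hi z) \<otimes> tp (hi y \<and> hi z)"
        using tc tt by (cases "hi x"; cases "hi y"; cases "hi z") (simp_all add: tp_def)
      have "m' (x \<otimes> y) z = m (lo x \<otimes> lo y) (lo z) \<otimes> tp ((hi x \<noteq> hi y) \<and> hi z)"
        using decompose(2)[OF that(1,2)] by (simp only: m'_def)
      also have "\<dots> = (m (lo x) (lo z) \<otimes> m (lo y) (lo z)) \<otimes> (tp (hi x \<and> hi z) \<otimes> tp (hi y \<and> hi z))"
        using that decompose(1) U(6) by (simp only: tp_xyz)
      also have "\<dots> = m' x z \<otimes> m' y z"
        using that decompose(1) U(4) tp_c by (simp add: m'_def m_ac tors2_def)
      finally show ?thesis .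
    qed
  qed
  moreover have "m' x y = m x y" if "x \<in> U" "y \<in> U" for x y
    using that U(4) by (simp add: m'_def lo_def hi_def tp_def tors2_def)
  ultimately show ?thesis using that by blast
qed

end

context abelian
begin

lemma diagonal_form_cong:
  assumes "diagonal_form G U n" "\<And>x y. x \<in> U \<Longrightarrow> y \<in> U \<Longrightarrow> m x y = n x y"
  shows "diagonal_form G U m"
proof -
  note U = diagonal_formD[OF assms(1)]
  show ?thesis
    unfolding diagonal_form_def
    using U assms(2) subgroup.m_closed[OF U(1)] by simp
qed

end

locale diagonal_form_chain = abelian +
  fixes \<C> :: "(('a \<times> 'a) \<times> 'a) set set"
  assumes chain: "\<C> \<in> chains {form_graph U m | U m. diagonal_form G U m}" and nonempty: "\<C> \<noteq> {}"
begin

definition chain_domain :: "'a set" where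
  "chain_domain = {x. ((x, x), x) \<in> \<Union>\<C>}"

definition chain_form :: "'a \<Rightarrow> 'a \<Rightarrow> 'a" where
  "chain_form x y = (THE z. ((x, y), z) \<in> \<Union>\<C>)"

lemma member_form_graph:
  assumes "\<Gamma> \<in> \<C>"
  obtains U m where "diagonal_form G U m" "\<Gamma> = form_graph U m"
  using chain assms by (auto simp: chains_def chain_subset_def)

lemma finite_subset_member:
  assumes "finite F" "F \<subseteq> \<Union>\<C>"
  obtains \<Gamma> where "\<Gamma> \<in> \<C>" "F \<subseteq> \<Gamma>"
  using finite_subset_Union_chain[OF assms nonempty] chain
  by (auto simp: chains_def chain_subset_def subset_chain_def)

lemma chain_form_eq:
  assumes "((x, y), z) \<in> \<Union>\<C>"
  shows "chain_form x y = z"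
proof -
  have "z' = z" if z': "((x, y), z') \<in> \<Union>\<C>" for z'
  proof -
    have "{((x, y), z), ((x, y), z')} \<subseteq> \<Union>\<C>" using assms z' by blast
    then obtain \<Gamma> where "\<Gamma> \<in> \<C>" "{((x, y), z), ((x, y), z')} \<subseteq> \<Gamma>"
      using finite_subset_member[of "{((x, y), z), ((x, y), z')}"] by blast
    moreover obtain V n where "\<Gamma> = form_graph V n" using member_form_graph \<open>\<Gamma> \<in> \<C>\<close> by blast
    ultimately show ?thesis by (simp add: mem_form_graph)
  qed
  then show ?thesis unfolding chain_form_def using assms by blast
qed

lemma chain_form_local:
  assumes F: "finite F" "F \<subseteq> chain_domain"
  shows "\<exists>V. diagonal_form G V chain_form \<and> F \<subseteq> V \<and> form_graph V chain_form \<subseteq> \<Union>\<C>"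
proof -
  have "(\<lambda>x. ((x, x), x)) ` F \<subseteq> \<Union>\<C>" using F(2) by (auto simp: chain_domain_def)
  then obtain \<Gamma> where "\<Gamma> \<in> \<C>" and F_\<Gamma>: "(\<lambda>x. ((x, x), x)) ` F \<subseteq> \<Gamma>"
    using finite_subset_member[OF finite_imageI[OF F(1)]] by blast
  obtain V n where V: "diagonal_form G V n" "\<Gamma> = form_graph V n"
    using member_form_graph \<open>\<Gamma> \<in> \<C>\<close> by blast
  have mn: "chain_form x y = n x y" if "x \<in> V" "y \<in> V" for x y
    using that V \<open>\<Gamma> \<in> \<C>\<close> by (intro chain_form_eq) (auto simp: mem_form_graph)
  have "F \<subseteq> V" using F_\<Gamma> V(2) by (auto simp: mem_form_graph)
  moreover have "form_graph V chain_form = \<Gamma>" using V(2) mn by (auto simp: form_graph_def)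
  ultimately show ?thesis using diagonal_form_cong[OF V(1) mn] \<open>\<Gamma> \<in> \<C>\<close> by blast
qed

lemma mem_chain_domain:
  assumes "diagonal_form G V chain_form" "form_graph V chain_form \<subseteq> \<Union>\<C>" "x \<in> V"
  shows "x \<in> chain_domain"
  using assms by (auto simp: chain_domain_def diagonal_form_graph_diag[symmetric])

lemma diagonal_form_chain_domain: "diagonal_form G chain_domain chain_form"
  unfolding diagonal_form_def
proof (intro conjI ballI)
  have "\<one> \<in> chain_domain"
  proof -
    obtain \<Gamma> where "\<Gamma> \<in> \<C>" using nonempty by blast
    moreover obtain V n where V: "diagonal_form G V n" "\<Gamma> = form_graph V n"
      using member_form_graph \<open>\<Gamma> \<in> \<C>\<close> by blast
    then have "((\<one>, \<one>), \<one>) \<in> \<Gamma>"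
      using diagonal_form_graph_diag[OF V(1)] subgroup.one_closed[OF diagonal_formD(1)[OF V(1)]] by simp
    ultimately show ?thesis by (auto simp: chain_domain_def)
  qed
  moreover have "x \<in> tors2 G" "inv x \<in> chain_domain" if x: "x \<in> chain_domain" for x
  proof -
    obtain V where V: "diagonal_form G V chain_form" "x \<in> V" "form_graph V chain_form \<subseteq> \<Union>\<C>"
      using chain_form_local[of "{x}"] x by auto
    then show "x \<in> tors2 G" by (auto simp: diagonal_form_def)
    show "inv x \<in> chain_domain"
      using V subgroup.m_inv_closed[OF diagonal_formD(1)[OF V(1)]] by (intro mem_chain_domain)
  qed
  moreover have "x \<otimes> y \<in> chain_domain" if xy: "x \<in> chain_domain" "y \<in> chain_domain" for x y
  proof -
    obtain V where V: "diagonal_form G V chain_form" "x \<in> V" "y \<in> V"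
        "form_graph V chain_form \<subseteq> \<Union>\<C>"
      using chain_form_local[of "{x, y}"] xy by auto
    then show ?thesis using subgroup.m_closed[OF diagonal_formD(1)[OF V(1)]] by (intro mem_chain_domain)
  qed
  ultimately show "chain_domain \<subseteq> tors2 G" "subgroup chain_domain G"
    by (auto intro!: subgroupI simp: tors2_def)
  show "chain_form x x = x" if "x \<in> chain_domain" for x
    using that by (simp add: chain_domain_def chain_form_eq)
  show "chain_form x y \<in> tors2 G" "chain_form x y = chain_form y x"
    if "x \<in> chain_domain" "y \<in> chain_domain" for x y
    using chain_form_local[of "{x, y}"] that by (auto simp: diagonal_form_def)
  show "chain_form (x \<otimes> y) z = chain_form x z \<otimes> chain_form y z"
    if "x \<in> chain_domain" "y \<in> chain_domain" "z \<in> chain_domain" for x y z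
    using chain_form_local[of "{x, y, z}"] that by (auto simp: diagonal_form_def)
qed

lemma Union_eq_form_graph: "\<Union>\<C> = form_graph chain_domain chain_form"
proof
  show "form_graph chain_domain chain_form \<subseteq> \<Union>\<C>"
  proof
    fix e assume "e \<in> form_graph chain_domain chain_form"
    then obtain x y where e: "e = ((x, y), chain_form x y)" "x \<in> chain_domain" "y \<in> chain_domain"
      by (auto simp: form_graph_def)
    then obtain V where "x \<in> V" "y \<in> V" "form_graph V chain_form \<subseteq> \<Union>\<C>"
      using chain_form_local[of "{x, y}"] by auto
    then show "e \<in> \<Union>\<C>" using e(1) by (auto simp: form_graph_def)
  qed
  show "\<Union>\<C> \<subseteq> form_graph chain_domain chain_form"
  proof
    fix e assume "e \<in> \<Union>\<C>"
    then obtain \<Gamma> x y z where e: "e = ((x, y), z)" "\<Gamma> \<in> \<C>" "((x, y), z) \<in> \<Gamma>"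
      by (metis UnionE prod.collapse)
    obtain V n where "diagonal_form G V n" "\<Gamma> = form_graph V n" using member_form_graph e(2) by blast
    then have "((x, x), x) \<in> \<Gamma>" "((y, y), y) \<in> \<Gamma>" using e(3)
      by (auto simp: mem_form_graph diagonal_form_def)
    then show "e \<in> form_graph chain_domain chain_form"
      using e chain_form_eq by (auto simp: chain_domain_def mem_form_graph)
  qed
qed

end

context abelian
begin

lemma exists_diagonal_form: "\<exists>m. diagonal_form G (tors2 G) m"
proof -
  let ?F = "{form_graph U m | U m. diagonal_form G U m}"
  obtain \<Gamma> where "\<Gamma> \<in> ?F" and max: "\<forall>\<Delta>\<in>?F. \<Gamma> \<subseteq> \<Delta> \<longrightarrow> \<Delta> = \<Gamma>"
  proof (rule Zorn_Lemma2[THEN bexE])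
    show "\<forall>\<C>\<in>chains ?F. \<exists>\<Delta>\<in>?F. \<forall>\<Gamma>\<in>\<C>. \<Gamma> \<subseteq> \<Delta>"
    proof
      fix \<C> assume "\<C> \<in> chains ?F"
      then show "\<exists>\<Delta>\<in>?F. \<forall>\<Gamma>\<in>\<C>. \<Gamma> \<subseteq> \<Delta>"
      proof (cases "\<C> = {}")
        case False
        interpret diagonal_form_chain G \<C> by unfold_locales fact+
        show ?thesis using diagonal_form_chain_domain Union_eq_form_graph by blast
      qed (use diagonal_form_one in blast)
    qed
  qed blast
  then obtain U m where m: "diagonal_form G U m" and \<Gamma>: "\<Gamma> = form_graph U m" by blast
  have "U = tors2 G"
  proof (rule ccontr)
    assume "U \<noteq> tors2 G"
    then obtain t where t: "t \<in> tors2 G" "t \<notin> U" using m by (auto simp: diagonal_form_def)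
    obtain m' where m': "diagonal_form G (U \<union> (U #> t)) m'" "\<And>x y. x \<in> U \<Longrightarrow> y \<in> U \<Longrightarrow> m' x y = m x y"
      using diagonal_form_extend[OF m t] by blast
    have "form_graph U m \<subseteq> form_graph (U \<union> (U #> t)) m'"
      using m' by (auto simp: form_graph_def)
    then have "form_graph (U \<union> (U #> t)) m' = form_graph U m" using max m'(1) \<Gamma> by blast
    moreover have "t \<in> U #> t"
      using subgroup.one_closed[OF diagonal_formD(1)[OF m]] t(1)
      by (auto simp: r_coset_def tors2_def intro!: bexI[of _ \<one>])
    ultimately have "t \<in> U"
      using diagonal_form_graph_diag[OF m'(1), of t] diagonal_form_graph_diag[OF m, of t] by auto
    with t show False by blast
  qed
  then show ?thesis using m by blast
qed

end

text \<open>The group \<open>A/2 \<times> A[2]\<close> with \<open>(C, t) (D, s) = (C + D + [m t s], t + s)\<close>; squaring gives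
  \<open>(C, t)\<^sup>2 = ([t], 0)\<close> because \<open>m t t = t\<close>.\<close>

definition twisted_sum :: "'a monoid \<Rightarrow> ('a \<Rightarrow> 'a \<Rightarrow> 'a) \<Rightarrow> ('a set \<times> 'a) monoid" where
  "twisted_sum G m = \<lparr>carrier = carrier (mod2 G) \<times> tors2 G,
     monoid.mult = (\<lambda>(C, t) (D, s). (C \<otimes>\<^bsub>mod2 G\<^esub> D \<otimes>\<^bsub>mod2 G\<^esub> (twoG G #>\<^bsub>G\<^esub> m t s), t \<otimes>\<^bsub>G\<^esub> s)),
     one = (\<one>\<^bsub>mod2 G\<^esub>, \<one>\<^bsub>G\<^esub>)\<rparr>"

locale tors2_diagonal_form = abelian +
  fixes m :: "'a \<Rightarrow> 'a \<Rightarrow> 'a"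
  assumes diagonal_form: "diagonal_form G (tors2 G) m"
begin

abbreviation "W \<equiv> mod2 G"
abbreviation "E \<equiv> twisted_sum G m"

sublocale W: comm_group W by (rule comm_group_mod2)

lemma carrier_twisted_sum: "carrier E = carrier W \<times> tors2 G"
  and mult_twisted_sum: "(C, t) \<otimes>\<^bsub>E\<^esub> (D, s) = (C \<otimes>\<^bsub>W\<^esub> D \<otimes>\<^bsub>W\<^esub> (twoG G #> m t s), t \<otimes> s)"
  and one_twisted_sum: "\<one>\<^bsub>E\<^esub> = (\<one>\<^bsub>W\<^esub>, \<one>)"
  by (simp_all add: twisted_sum_def)

lemma tors2_carrier: "t \<in> tors2 G \<Longrightarrow> t \<in> carrier G"
  and tors2_mult: "t \<in> tors2 G \<Longrightarrow> s \<in> tors2 G \<Longrightarrow> t \<otimes> s \<in> tors2 G"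
  and tors2_sq: "t \<in> tors2 G \<Longrightarrow> t \<otimes> t = \<one>"
  and one_tors2: "\<one> \<in> tors2 G"
  using subgroup.m_closed[OF subgroup_tors2] by (auto simp: tors2_def)

lemma form_tors2: "t \<in> tors2 G \<Longrightarrow> s \<in> tors2 G \<Longrightarrow> m t s \<in> tors2 G"
  and form_diag: "t \<in> tors2 G \<Longrightarrow> m t t = t"
  and form_sym: "t \<in> tors2 G \<Longrightarrow> s \<in> tors2 G \<Longrightarrow> m t s = m s t"
  and form_left: "t \<in> tors2 G \<Longrightarrow> s \<in> tors2 G \<Longrightarrow> u \<in> tors2 G \<Longrightarrow> m (t \<otimes> s) u = m t u \<otimes> m s u"
  using diagonal_formD[OF diagonal_form] by auto

lemma form_right:
  assumes t: "t \<in> tors2 G" and s: "s \<in> tors2 G" and u: "u \<in> tors2 G"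
  shows "m u (t \<otimes> s) = m u t \<otimes> m u s"
proof -
  have "m u (t \<otimes> s) = m (t \<otimes> s) u" by (rule form_sym[OF u tors2_mult[OF t s]])
  also have "\<dots> = m t u \<otimes> m s u" by (rule form_left[OF t s u])
  finally show ?thesis by (simp only: form_sym[OF t u] form_sym[OF s u])
qed

lemma form_one: "m \<one> \<one> = \<one>"
  using form_diag[OF one_tors2] .

lemma rcos_twoG_closed: "a \<in> carrier G \<Longrightarrow> twoG G #> a \<in> carrier W"
  using carrier_mod2 by simp

lemma rcos_form_closed: "t \<in> tors2 G \<Longrightarrow> s \<in> tors2 G \<Longrightarrow> twoG G #> m t s \<in> carrier W"
  using form_tors2 tors2_carrier rcos_twoG_closed by simp

lemma rcos_twoG_mult: "a \<in> carrier G \<Longrightarrow> b \<in> carrier G \<Longrightarrow> twoG G #> (a \<otimes> b) = (twoG G #> a) \<otimes>\<^bsub>W\<^esub> (twoG G #> b)"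
  by (simp add: hom_mult[OF rcos_twoG_hom])

lemma rcos_twoG_one: "twoG G #> \<one> = \<one>\<^bsub>W\<^esub>"
  by (simp add: rcos_twoG_eq_one_iff subgroup.one_closed[OF subgroup_twoG])

text \<open>Associativity of the twisted product is the cocycle identity for \<open>(t, s) \<mapsto> [m t s]\<close>,
  which holds because \<open>m\<close> is bilinear.\<close>

lemma twisted_sum_assoc:
  assumes CDF: "C \<in> carrier W" "D \<in> carrier W" "F \<in> carrier W"
    and tsu: "t \<in> tors2 G" "s \<in> tors2 G" "u \<in> tors2 G"
  shows "(C, t) \<otimes>\<^bsub>E\<^esub> (D, s) \<otimes>\<^bsub>E\<^esub> (F, u) = (C, t) \<otimes>\<^bsub>E\<^esub> ((D, s) \<otimes>\<^bsub>E\<^esub> (F, u))"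
proof -
  have tsu_c: "t \<in> carrier G" "s \<in> carrier G" "u \<in> carrier G" using tsu tors2_carrier by auto
  have "m t s \<otimes> m (t \<otimes> s) u = m s u \<otimes> m t (s \<otimes> u)"
    using tsu form_tors2 tors2_carrier by (simp add: form_left form_right m_ac)
  then have cocycle: "(twoG G #> m t s) \<otimes>\<^bsub>W\<^esub> (twoG G #> m (t \<otimes> s) u) =
      (twoG G #> m s u) \<otimes>\<^bsub>W\<^esub> (twoG G #> m t (s \<otimes> u))"
    using tsu form_tors2 tors2_carrier tors2_mult by (metis rcos_twoG_mult)
  have c: "twoG G #> m t s \<in> carrier W" "twoG G #> m (t \<otimes> s) u \<in> carrier W"
    "twoG G #> m s u \<in> carrier W" "twoG G #> m t (s \<otimes> u) \<in> carrier W"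
    using tsu tors2_mult rcos_form_closed by auto
  have "C \<otimes>\<^bsub>W\<^esub> D \<otimes>\<^bsub>W\<^esub> (twoG G #> m t s) \<otimes>\<^bsub>W\<^esub> F \<otimes>\<^bsub>W\<^esub> (twoG G #> m (t \<otimes> s) u) =
      (C \<otimes>\<^bsub>W\<^esub> D \<otimes>\<^bsub>W\<^esub> F) \<otimes>\<^bsub>W\<^esub> ((twoG G #> m t s) \<otimes>\<^bsub>W\<^esub> (twoG G #> m (t \<otimes> s) u))"
    using CDF c by (simp add: W.m_ac)
  also have "\<dots> = C \<otimes>\<^bsub>W\<^esub> (D \<otimes>\<^bsub>W\<^esub> F \<otimes>\<^bsub>W\<^esub> (twoG G #> m s u)) \<otimes>\<^bsub>W\<^esub> (twoG G #> m t (s \<otimes> u))"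
    using CDF c by (simp only: cocycle) (simp add: W.m_ac)
  finally show ?thesis using tsu_c by (simp add: mult_twisted_sum m_assoc)
qed

lemma comm_group_twisted_sum: "comm_group E"
proof -
  have closed: "(C, t) \<otimes>\<^bsub>E\<^esub> (D, s) \<in> carrier E"
    and comm: "(C, t) \<otimes>\<^bsub>E\<^esub> (D, s) = (D, s) \<otimes>\<^bsub>E\<^esub> (C, t)"
    if "C \<in> carrier W" "t \<in> tors2 G" "D \<in> carrier W" "s \<in> tors2 G" for C t D s
    using that by (simp_all add: carrier_twisted_sum mult_twisted_sum rcos_form_closed tors2_mult
        form_sym W.m_comm m_comm tors2_carrier)
  have l_one: "(\<one>\<^bsub>W\<^esub>, \<one>) \<otimes>\<^bsub>E\<^esub> (C, t) = (C, t)" if C: "C \<in> carrier W" and t: "t \<in> tors2 G" for C t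
    using C t tors2_carrier one_tors2 form_left[OF one_tors2 one_tors2 t]
    by (simp add: mult_twisted_sum form_tors2 rcos_twoG_one)
  have l_inv: "\<exists>y\<in>carrier E. y \<otimes>\<^bsub>E\<^esub> (C, t) = \<one>\<^bsub>E\<^esub>" if C: "C \<in> carrier W" and t: "t \<in> tors2 G" for C t
  proof -
    let ?D = "inv\<^bsub>W\<^esub> (C \<otimes>\<^bsub>W\<^esub> (twoG G #> t))"
    have "?D \<in> carrier W" using C t tors2_carrier rcos_twoG_closed by simp
    moreover have "(?D, t) \<otimes>\<^bsub>E\<^esub> (C, t) = \<one>\<^bsub>E\<^esub>"
      using C t tors2_carrier rcos_twoG_closed
      by (simp add: mult_twisted_sum one_twisted_sum form_diag tors2_sq W.m_assoc)
    ultimately show ?thesis using t by (auto simp: carrier_twisted_sum)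
  qed
  show ?thesis
  proof (rule comm_groupI)
    show "x \<otimes>\<^bsub>E\<^esub> y \<in> carrier E" "x \<otimes>\<^bsub>E\<^esub> y = y \<otimes>\<^bsub>E\<^esub> x"
      if "x \<in> carrier E" "y \<in> carrier E" for x y
      using that closed comm by (auto simp: carrier_twisted_sum)
    show "x \<otimes>\<^bsub>E\<^esub> y \<otimes>\<^bsub>E\<^esub> z = x \<otimes>\<^bsub>E\<^esub> (y \<otimes>\<^bsub>E\<^esub> z)"
      if "x \<in> carrier E" "y \<in> carrier E" "z \<in> carrier E" for x y z
      using that twisted_sum_assoc by (auto simp: carrier_twisted_sum)
    show "\<one>\<^bsub>E\<^esub> \<otimes>\<^bsub>E\<^esub> x = x" "\<exists>y\<in>carrier E. y \<otimes>\<^bsub>E\<^esub> x = \<one>\<^bsub>E\<^esub>" if "x \<in> carrier E" for x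
      using that l_one l_inv by (auto simp: carrier_twisted_sum one_twisted_sum)
  qed (simp add: carrier_twisted_sum one_twisted_sum one_tors2)
qed

end

lemma md_simps [simp]:
  "md_A (A, B, phi, psi) = A" "md_B (A, B, phi, psi) = B"
  "md_phi (A, B, phi, psi) = phi" "md_psi (A, B, phi, psi) = psi"
  by (simp_all add: md_A_def md_B_def md_phi_def md_psi_def)

lemma exact_md_iso:
  fixes B' :: "'c monoid"
  assumes M: "exact_md (A, B, phi, psi)" and e: "e \<in> iso B B'" and B': "comm_group B'"
  shows "exact_md (A, B', e \<circ> phi, psi \<circ> inv_into (carrier B) e)"
proof -
  interpret M: exact_moore "(A, B, phi, psi)" by (rule exact_moore.intro[OF M])
  interpret B': comm_group B' by (rule B')
  let ?e' = "inv_into (carrier B) e"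
  have B: "group B" and phi: "phi \<in> hom A B" and psi: "psi \<in> hom B A"
    using M.B.is_group M.phi.homh M.psi.homh by simp_all
  have e_hom: "e \<in> hom B B'" and bij: "bij_betw e (carrier B) (carrier B')"
    using e by (auto simp: iso_def)
  have e'_hom: "?e' \<in> hom B' B" using group.iso_set_sym[OF B e] by (simp add: iso_def)
  have e'e: "?e' (e b) = b" if "b \<in> carrier B" for b
    using that bij by (simp add: bij_betw_def)
  have ee': "e (?e' b) = b" "?e' b \<in> carrier B" if "b \<in> carrier B'" for b
    using that bij by (auto simp: bij_betw_def f_inv_into_f inv_into_into)
  have phi': "e \<circ> phi \<in> hom A B'"
    using hom_compose[OF phi e_hom] by (simp add: hom_def compose_def)
  have psi': "psi \<circ> ?e' \<in> hom B' A"
    using hom_compose[OF e'_hom psi] by (simp add: hom_def compose_def)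
  have "moore_diagram (A, B', e \<circ> phi, psi \<circ> ?e')"
    unfolding moore_diagram_def
    using M.A.comm_group_axioms B' phi' psi' e'e ee' M.psi_phi M.phi_psi e_hom
      hom_in_carrier[OF phi] hom_in_carrier[OF psi]
    by (simp add: hom_mult)
  moreover have phibar': "md_phibar (A, B', e \<circ> phi, psi \<circ> ?e') C = e (M.phibar C)"
    if "C \<in> carrier (mod2 A)" for C
    using that by (simp add: md_phibar_def)
  moreover have "inj_on (md_phibar (A, B', e \<circ> phi, psi \<circ> ?e')) (carrier (mod2 A))"
    using M.phibar_inj bij M.phibar.hom_closed
    by (auto simp: inj_on_def phibar' bij_betw_def)
  moreover have "md_phibar (A, B', e \<circ> phi, psi \<circ> ?e') ` carrier (mod2 A) = kernel B' A (psi \<circ> ?e')"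
  proof -
    have "kernel B' A (psi \<circ> ?e') = e ` kernel B A psi"
      using e'e ee' M.psi.hom_closed e_hom
      by (auto simp: kernel_def hom_in_carrier image_iff) metis
    moreover have "md_phibar (A, B', e \<circ> phi, psi \<circ> ?e') ` carrier (mod2 A) = e ` M.phibar ` carrier (mod2 A)"
      by (simp add: image_image phibar' cong: image_cong)
    ultimately show ?thesis using M.phibar_image by simp
  qed
  moreover have "(psi \<circ> ?e') ` carrier B' = tors2 A"
  proof -
    have "(psi \<circ> ?e') ` carrier B' = psi ` ?e' ` carrier B'" by (simp only: image_comp)
    also have "?e' ` carrier B' = carrier B" using bij_betw_inv_into[OF bij] by (simp add: bij_betw_def)
    finally show ?thesis using M.psi_image by simp
  qed
  ultimately show ?thesis by (simp add: exact_md_def)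
qed

context tors2_diagonal_form
begin

definition twisted_diagram :: "('a, 'a set \<times> 'a) md" where
  "twisted_diagram = (G, E, \<lambda>a. (twoG G #> a, \<one>), snd)"

lemma exact_twisted_diagram: "exact_md twisted_diagram"
proof -
  have phi: "(\<lambda>a. (twoG G #> a, \<one>)) \<in> hom G E"
    by (rule homI) (simp_all add: carrier_twisted_sum mult_twisted_sum rcos_twoG_closed one_tors2
        form_one rcos_twoG_one rcos_twoG_mult)
  have psi: "snd \<in> hom E G"
    by (rule homI) (auto simp: carrier_twisted_sum mult_twisted_sum tors2_carrier)
  have sq: "(C, t) \<otimes>\<^bsub>E\<^esub> (C, t) = (twoG G #> t, \<one>)" if "C \<in> carrier W" "t \<in> tors2 G" for C t
    using that by (simp add: mult_twisted_sum form_diag tors2_sq mod2_sq rcos_twoG_closed tors2_carrier)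
  have "moore_diagram twisted_diagram"
    using comm_group_twisted_sum comm_group_axioms phi psi sq
    by (auto simp: moore_diagram_def twisted_diagram_def carrier_twisted_sum)
  moreover have phibar: "md_phibar twisted_diagram C = (C, \<one>)" if "C \<in> carrier W" for C
    using that some_in_mod2 by (simp add: md_phibar_def twisted_diagram_def)
  ultimately show ?thesis
    by (auto simp: exact_md_def inj_on_def twisted_diagram_def kernel_def carrier_twisted_sum
        one_tors2 image_iff intro!: bexI[of _ "(\<one>\<^bsub>W\<^esub>, _)"])
qed

end

lemma abelian_exists_exact_md:
  fixes G :: "'i monoid"
  assumes G: "comm_group G"
  shows "\<exists>M::('i, 'i \<times> 'i) md. exact_md M \<and> md_A M \<cong> G"
proof -
  interpret abelian G by (rule abelian.intro[OF G])
  obtain m where "diagonal_form G (tors2 G) m" using exists_diagonal_form by blast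
  then interpret tors2_diagonal_form G m by unfold_locales
  define e where "e p = (SOME a. a \<in> fst p, snd p)" for p :: "'i set \<times> 'i"
  have inj: "inj_on e (carrier E)"
  proof (rule inj_onI)
    fix p q assume "p \<in> carrier E" "q \<in> carrier E" "e p = e q"
    then show "p = q"
      using some_in_mod2(2)[of "fst p"] some_in_mod2(2)[of "fst q"]
      by (auto simp: e_def carrier_twisted_sum prod_eq_iff)
  qed
  then have iso: "e \<in> iso E (image_group e E)" by (rule inj_imp_image_group_iso)
  have "group (image_group e E)"
    using group.inj_imp_image_group_is_group[OF comm_group.axioms(2)[OF comm_group_twisted_sum] inj] .
  moreover have "E \<cong> image_group e E" using iso by (auto simp: is_iso_def)
  ultimately have "comm_group (image_group e E)"
    using comm_group.iso_imp_comm_group[OF comm_group_twisted_sum] group.is_monoid by blast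
  then have "exact_md (G, image_group e E, e \<circ> (\<lambda>a. (twoG G #>\<^bsub>G\<^esub> a, \<one>\<^bsub>G\<^esub>)), snd \<circ> inv_into (carrier E) e)"
    using exact_md_iso[OF exact_twisted_diagram[unfolded twisted_diagram_def] iso] by blast
  then show ?thesis by force
qed

section \<open>Naturality\<close>

lemma emd_iota_natural:
  fixes N :: "('e, 'f) md" and M :: "('a, 'b) md" and M' :: "('c, 'd) md" and N' :: "('g, 'h) md"
  assumes N: "exact_md N" and M: "exact_md M" and M': "exact_md M'" and N': "exact_md N'"
    and uv: "(u, v) \<in> emd_hom N M" and uv': "(u', v') \<in> emd_hom M' N'"
    and h: "h \<in> carrier (hom_group (tors2_grp (md_A M)) (mod2 (md_A M')))"
  shows "emd_comp N (u', v') (emd_comp N (emd_iota M M' h) (u, v)) =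
    emd_iota N N' (hom2_map (md_A N) u (md_A M') (md_A N') u' h)"
proof -
  interpret N: exact_moore N by (rule exact_moore.intro[OF N])
  interpret M: exact_moore M by (rule exact_moore.intro[OF M])
  interpret M': exact_moore M' by (rule exact_moore.intro[OF M'])
  interpret N': exact_moore N' by (rule exact_moore.intro[OF N'])
  note U = emd_homD[OF uv] and U' = emd_homD[OF uv']
  have hC: "h t \<in> carrier (mod2 M'.A)" if "t \<in> tors2 M.A" for t
    using h that by (auto simp: hom_group_def hom_ext_def hom_def M.A.carrier_tors2_grp)
  have "v' (M'.phibar (h (M.psi (v y)))) = N'.phibar (hom2_map N.A u M'.A N'.A u' h (N.psi y))"
    if y: "y \<in> carrier N.B" for y
  proof -
    have vy: "v y \<in> carrier M.B" using U(2) y by (simp add: hom_in_carrier)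
    define C where "C = h (M.psi (v y))"
    have C: "C \<in> carrier (mod2 M'.A)" using hC[OF M.psi_tors2[OF vy]] by (simp add: C_def)
    define s where "s = (SOME a. a \<in> C)"
    have s: "s \<in> carrier M'.A" using M'.A.some_in_mod2(1)[OF C] by (simp add: s_def)
    have "v' (M'.phibar C) = v' (M'.phi s)" using C by (simp add: md_phibar_def s_def)
    also have "\<dots> = N'.phibar (twoG N'.A #>\<^bsub>N'.A\<^esub> u' s)"
      using U'(1,5) s by (simp add: N'.phibar_rcos hom_in_carrier)
    also have "twoG N'.A #>\<^bsub>N'.A\<^esub> u' s = hom2_map N.A u M'.A N'.A u' h (N.psi y)"
      using N.psi_tors2[OF y] C U(6)[OF y]
      by (simp add: hom2_map_def N.A.carrier_tors2_grp mod2_map_def C_def s_def)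
    finally show ?thesis by (simp add: C_def)
  qed
  moreover have "u' \<one>\<^bsub>M'.A\<^esub> = \<one>\<^bsub>N'.A\<^esub>"
    using U'(1) by (simp add: hom_one M'.A.is_group N'.A.is_group)
  ultimately show ?thesis
    using U(1,2) by (auto simp: emd_comp_def emd_iota_def compose_def hom_in_carrier intro!: restrict_ext)
qed

theorem corollary3p20:
  shows "
   \<comment> \<open>alpha is full\<close>
   (\<forall>(M::('a,'b) md) (M'::('c,'d) md). exact_md M \<and> exact_md M' \<longrightarrow>
      (\<forall>f\<in>hom_ext (md_A M) (md_A M'). \<exists>g. (f, g) \<in> emd_hom M M'))
 \<and> \<comment> \<open>alpha is essentially surjective\<close>
   (\<forall>G::'i monoid. comm_group G \<longrightarrow>
      (\<exists>M::('i, 'i \<times> 'i) md. exact_md M \<and> md_A M \<cong> G))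
 \<and> \<comment> \<open>alpha reflects isomorphisms\<close>
   (\<forall>(M::('a,'b) md) (M'::('c,'d) md) p. exact_md M \<and> exact_md M' \<and> p \<in> emd_hom M M' \<and>
      md_alpha p \<in> iso (md_A M) (md_A M') \<longrightarrow>
      (\<exists>q\<in>emd_hom M' M. emd_comp M q p = emd_id M \<and> emd_comp M' p q = emd_id M'))
 \<and> \<comment> \<open>short exact sequence of abelian groups\<close>
   (\<forall>(M::('a,'b) md) (M'::('c,'d) md). exact_md M \<and> exact_md M' \<longrightarrow>
      comm_group (hom_group (tors2_grp (md_A M)) (mod2 (md_A M'))) \<and>
      comm_group (emd_group M M') \<and>
      comm_group (hom_group (md_A M) (md_A M')) \<and>
      emd_iota M M' \<in> hom (hom_group (tors2_grp (md_A M)) (mod2 (md_A M'))) (emd_group M M') \<and>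
      inj_on (emd_iota M M') (carrier (hom_group (tors2_grp (md_A M)) (mod2 (md_A M')))) \<and>
      md_alpha \<in> hom (emd_group M M') (hom_group (md_A M) (md_A M')) \<and>
      emd_iota M M' ` carrier (hom_group (tors2_grp (md_A M)) (mod2 (md_A M'))) =
        kernel (emd_group M M') (hom_group (md_A M) (md_A M')) md_alpha \<and>
      md_alpha ` carrier (emd_group M M') = carrier (hom_group (md_A M) (md_A M')))
 \<and> \<comment> \<open>naturality in M and M'\<close>
   (\<forall>(N::('e,'f) md) (M::('a,'b) md) (M'::('c,'d) md) (N'::('g,'h) md) u v u' v' h.
      exact_md N \<and> exact_md M \<and> exact_md M' \<and> exact_md N' \<and>
      (u, v) \<in> emd_hom N M \<and> (u', v') \<in> emd_hom M' N' \<and>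
      h \<in> carrier (hom_group (tors2_grp (md_A M)) (mod2 (md_A M'))) \<longrightarrow>
      emd_comp N (u', v') (emd_comp N (emd_iota M M' h) (u, v)) =
        emd_iota N N' (hom2_map (md_A N) u (md_A M') (md_A N') u' h) \<and>
      (\<forall>p\<in>emd_hom M M'. md_alpha (emd_comp N (u', v') (emd_comp N p (u, v))) =
        compose (carrier (md_A N)) u' (compose (carrier (md_A N)) (md_alpha p) u)))"
proof (intro conjI allI impI ballI)
  fix M :: "('a, 'b) md" and M' :: "('c, 'd) md"
  assume "exact_md M \<and> exact_md M'"
  then interpret exact_moore_pair M M' by (simp add: exact_moore_pair_def exact_moore_def)
  show "\<exists>g. (f, g) \<in> emd_hom M M'" if "f \<in> hom_ext M.A M'.A" for f
    using that by (rule exists_emd_hom)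
  show "comm_group (hom_group (tors2_grp M.A) (mod2 M'.A))" "comm_group (emd_group M M')"
    "comm_group (hom_group M.A M'.A)"
    by (fact comm_group_hom_group_tors2_mod2 comm_group_emd_group comm_group_hom_group_A)+
  show "emd_iota M M' \<in> hom (hom_group (tors2_grp M.A) (mod2 M'.A)) (emd_group M M')"
    "inj_on (emd_iota M M') (carrier (hom_group (tors2_grp M.A) (mod2 M'.A)))"
    "md_alpha \<in> hom (emd_group M M') (hom_group M.A M'.A)"
    "emd_iota M M' ` carrier (hom_group (tors2_grp M.A) (mod2 M'.A)) =
      kernel (emd_group M M') (hom_group M.A M'.A) md_alpha"
    "md_alpha ` carrier (emd_group M M') = carrier (hom_group M.A M'.A)"
    by (fact emd_iota_hom inj_emd_iota md_alpha_hom emd_iota_image md_alpha_onto)+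
next
  fix M :: "('a, 'b) md" and M' :: "('c, 'd) md" and p
  assume "exact_md M \<and> exact_md M' \<and> p \<in> emd_hom M M' \<and> md_alpha p \<in> iso (md_A M) (md_A M')"
  then show "\<exists>q\<in>emd_hom M' M. emd_comp M q p = emd_id M \<and> emd_comp M' p q = emd_id M'"
    by (intro exact_moore_pair.alpha_reflects_iso) (simp_all add: exact_moore_pair_def exact_moore_def)
next
  fix G :: "'i monoid"
  assume "comm_group G"
  then show "\<exists>M::('i, 'i \<times> 'i) md. exact_md M \<and> md_A M \<cong> G" by (rule abelian_exists_exact_md)
next
  fix N :: "('e, 'f) md" and M :: "('a, 'b) md" and M' :: "('c, 'd) md" and N' :: "('g, 'h) md"
    and u v u' v' h
  assume "exact_md N \<and> exact_md M \<and> exact_md M' \<and> exact_md N' \<and>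
    (u, v) \<in> emd_hom N M \<and> (u', v') \<in> emd_hom M' N' \<and>
    h \<in> carrier (hom_group (tors2_grp (md_A M)) (mod2 (md_A M')))"
  then show "emd_comp N (u', v') (emd_comp N (emd_iota M M' h) (u, v)) =
      emd_iota N N' (hom2_map (md_A N) u (md_A M') (md_A N') u' h)"
    by (intro emd_iota_natural) simp_all
  show "md_alpha (emd_comp N (u', v') (emd_comp N p (u, v))) =
      compose (carrier (md_A N)) u' (compose (carrier (md_A N)) (md_alpha p) u)" for p
    by (simp add: md_alpha_def emd_comp_def)
qed

end
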